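(* There is a constant $C_\circ=C_\circ(b,c_\pm)\ge1$ such that $$|m(\xi_1,\xi_2)-m(\xi_1,0)|\le C_\circ\Big(\frac{|\xi_2|}{|\xi_1|^b}\Big)^{\frac1{2b}}\quad(\xi_1\ne0),\qquad |m(\xi_1,\xi_2)-m(0,\xi_2)|\le C_\circ\Big(\frac{|\xi_1|^b}{|\xi_2|}\Big)^{\frac1{2b}}\quad(\xi_2\ne0).$$
   Context: Fix $b>1$ and nonzero reals $c_+,c_-$. For $\xi=(\xi_1,\xi_2)\in\mathbb R^2\setminus\{0\}$ let $$m(\xi_1,\xi_2)=\lim_{\varepsilon\to0^+,\,R\to\infty}\Big(\int_{\varepsilon<t\le R}e^{-i(t\xi_1+c_+t^b\xi_2)}\frac{dt}t+\int_{-R<t<-\varepsilon}e^{-i(t\xi_1+c_-(-t)^b\xi_2)}\frac{dt}t\Big),$$ the multiplier of the Hilbert transform along the curve $t\mapsto(t,\gamma_b(t))$, $\gamma_b(t)=c_+t^b$ ($t>0$), $c_-(-t)^b$ ($t<0$). *)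

theory Defs
  imports "HOL-Analysis.Analysis"
begin

text \<open>Truncated multiplier: integral over eps < t <= R and -R < t < -eps
  (endpoints are null sets for the integral).\<close>
definition mult_trunc :: "real \<Rightarrow> real \<Rightarrow> real \<Rightarrow> real \<Rightarrow> real \<Rightarrow> real \<Rightarrow> real \<Rightarrow> complex" where
  "mult_trunc b cp cm x1 x2 eps R =
     integral {eps..R} (\<lambda>t. cis (- (t * x1 + cp * t powr b * x2)) / complex_of_real t)
   + integral {-R..-eps} (\<lambda>t. cis (- (t * x1 + cm * (- t) powr b * x2)) / complex_of_real t)"

definition mult_m :: "real \<Rightarrow> real \<Rightarrow> real \<Rightarrow> real \<Rightarrow> real \<Rightarrow> complex" where
  "mult_m b cp cm x1 x2 =
     Lim (at_right 0 \<times>\<^sub>F at_top) (\<lambda>(eps, R). mult_trunc b cp cm x1 x2 eps R)"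

end

(*
  Write K(a, g, t) = exp (-i (a t + g t^b)) / t for t > 0. Folding the negative half-line onto the
  positive one, m(x1, x2) is the improper integral over (0, oo) of K(x1, c_+ x2) - K(-x1, c_- x2),
  so both inequalities follow from bounds, uniform over all intervals [u, v] in (0, oo), on the
  integrals of K(a, g) - K(a, 0) and of K(a, g) - K(0, g). Rescaling t -> |a| t (and complex
  conjugation if a < 0) reduces these to a = 1, i.e. to bounding the integrals of K(1, d) - K(1, 0)
  by C |d|^(1/(2b)) and those of K(1, d) - K(0, d) by C |d|^(-1/(2b)).

  On (0, A] the two kernels differ pointwise by O(|d| t^(b-1)); beyond A each kernel is treated by a
  first derivative test (integration by parts against exp (i phi) / (t phi')), except for a window
  around the stationary point of t - |d| t^b whose width balances its logarithmic length against
  the nonstationary contributions. The cut A = |d|^(-1/(2b)) balances the two regimes. Where the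
  scales 1 and |d|^(-1/b) of the linear and the power phase differ, the trivial bound 1/t costs
  |ln |d|| / b, which is dominated by |d|^(1/(2b)) or |d|^(-1/(2b)) respectively.
*)

theory Submission
  imports Defs
begin

lemma norm_cis_minus_one_le: "cmod (cis x - 1) \<le> \<bar>x\<bar>"
proof -
  have "(cmod (cis x - 1))\<^sup>2 = (cos x - 1)\<^sup>2 + (sin x)\<^sup>2"
    by (simp add: cmod_power2 cis.code)
  also have "\<dots> = 2 - 2 * cos x"
    using sin_cos_squared_add[of x] by (simp add: power2_eq_square algebra_simps)
  also have "\<dots> = 4 * (sin (x/2))\<^sup>2"
    using cos_double_sin[of "x/2"] by simp
  also have "\<dots> \<le> 4 * (x/2)\<^sup>2"
    by (metis abs_sin_x_le_abs_x abs_ge_zero power2_abs power_mono mult_left_mono zero_le_numeral)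
  also have "\<dots> = x\<^sup>2"
    by (simp add: power2_eq_square)
  finally show ?thesis
    by (metis abs_le_square_iff abs_norm_cancel)
qed

lemma norm_cis_diff_le: "cmod (cis a - cis c) \<le> \<bar>a - c\<bar>"
proof -
  have "cis a - cis c = cis c * (cis (a - c) - 1)"
    by (simp add: algebra_simps cis_mult)
  hence "cmod (cis a - cis c) = cmod (cis (a - c) - 1)"
    by (simp add: norm_mult)
  thus ?thesis
    using norm_cis_minus_one_le by simp
qed

lemma has_vector_derivative_cis_comp:
  assumes "(f has_real_derivative f') (at t)"
  shows "((\<lambda>t. cis (f t)) has_vector_derivative (\<i> * complex_of_real f' * cis (f t))) (at t)"
proof -
  have "((\<lambda>t. \<i> * complex_of_real (f t)) has_vector_derivative (\<i> * complex_of_real f')) (at t)"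
    using assms
    by (auto intro!: derivative_eq_intros
        simp: has_real_derivative_iff_has_vector_derivative[symmetric] has_vector_derivative_def
          has_field_derivative_def fun_eq_iff scaleR_conv_of_real mult_ac)
  hence "((exp \<circ> (\<lambda>t. \<i> * complex_of_real (f t))) has_vector_derivative
      (\<i> * complex_of_real f') * exp (\<i> * complex_of_real (f t))) (at t)"
    by (rule field_vector_diff_chain_at) (rule DERIV_exp)
  thus ?thesis
    by (simp add: cis_conv_exp o_def mult.assoc)
qed

lemma integrable_on_pos_interval:
  fixes f :: "real \<Rightarrow> complex"
  assumes "continuous_on {0<..} f" "0 < u"
  shows "f integrable_on {u..v}"
proof -
  have "{u..v} \<subseteq> {0<..}"
    using assms(2) by auto
  thus ?thesis
    using continuous_on_subset[OF assms(1)] integrable_continuous_interval by blast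
qed

section \<open>Uniform bounds for integrals over subintervals\<close>

definition integrals_le :: "(real \<Rightarrow> complex) \<Rightarrow> real set \<Rightarrow> real \<Rightarrow> bool" where
  "integrals_le f S B \<longleftrightarrow> (\<forall>u\<in>S. \<forall>v\<in>S. u \<le> v \<longrightarrow> cmod (integral {u..v} f) \<le> B)"

lemma integrals_le_nonneg: "integrals_le f S B \<Longrightarrow> p \<in> S \<Longrightarrow> 0 \<le> B"
  unfolding integrals_le_def by (metis norm_ge_zero order_trans order_refl)

lemma integrals_le_mono: "integrals_le f T B \<Longrightarrow> S \<subseteq> T \<Longrightarrow> B \<le> B' \<Longrightarrow> integrals_le f S B'"
  unfolding integrals_le_def by (meson order_trans subsetD)

lemma integrals_le_zero: "integrals_le (\<lambda>t. 0) S B \<longleftrightarrow> (S \<noteq> {} \<longrightarrow> 0 \<le> B)"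
  unfolding integrals_le_def by auto

lemma integrals_le_cnj: "integrals_le f S B \<Longrightarrow> integrals_le (\<lambda>t. cnj (f t)) S B"
  unfolding integrals_le_def by (simp add: integral_cnj[symmetric])

lemma integrals_le_cong:
  assumes "\<And>t. 0 < t \<Longrightarrow> f t = g t" "S \<subseteq> {0<..}" "integrals_le g S B"
  shows "integrals_le f S B"
  unfolding integrals_le_def
proof (intro ballI impI)
  fix u v assume uv: "u \<in> S" "v \<in> S" "u \<le> v"
  hence "integral {u..v} f = integral {u..v} g"
    using assms(1,2) by (intro integral_cong) auto
  thus "cmod (integral {u..v} f) \<le> B"
    using assms(3) uv unfolding integrals_le_def by auto
qed

lemma integrals_le_add:
  assumes "continuous_on {0<..} f" "continuous_on {0<..} g" "S \<subseteq> {0<..}"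
    "integrals_le f S B1" "integrals_le g S B2"
  shows "integrals_le (\<lambda>t. f t + g t) S (B1 + B2)"
  unfolding integrals_le_def
proof (intro ballI impI)
  fix u v assume uv: "u \<in> S" "v \<in> S" "u \<le> v"
  hence "integral {u..v} (\<lambda>t. f t + g t) = integral {u..v} f + integral {u..v} g"
    using assms(3) by (intro integral_add integrable_on_pos_interval assms(1,2)) auto
  moreover have "cmod (integral {u..v} f) \<le> B1" "cmod (integral {u..v} g) \<le> B2"
    using assms(4,5) uv unfolding integrals_le_def by auto
  ultimately show "cmod (integral {u..v} (\<lambda>t. f t + g t)) \<le> B1 + B2"
    by (simp add: norm_triangle_le)
qed

lemma integrals_le_diff:
  assumes "continuous_on {0<..} f" "continuous_on {0<..} g" "S \<subseteq> {0<..}"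
    "integrals_le f S B1" "integrals_le g S B2"
  shows "integrals_le (\<lambda>t. f t - g t) S (B1 + B2)"
  unfolding integrals_le_def
proof (intro ballI impI)
  fix u v assume uv: "u \<in> S" "v \<in> S" "u \<le> v"
  hence "integral {u..v} (\<lambda>t. f t - g t) = integral {u..v} f - integral {u..v} g"
    using assms(3) by (intro integral_diff integrable_on_pos_interval assms(1,2)) auto
  moreover have "cmod (integral {u..v} f) \<le> B1" "cmod (integral {u..v} g) \<le> B2"
    using assms(4,5) uv unfolding integrals_le_def by auto
  ultimately show "cmod (integral {u..v} (\<lambda>t. f t - g t)) \<le> B1 + B2"
    by (simp add: norm_triangle_le_diff)
qed

lemma integrals_le_join:
  assumes cont: "continuous_on {0<..} f" and ST: "S \<subseteq> {0<..}" "T \<subseteq> {0<..}"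
    and p: "p \<in> S" "p \<in> T" "\<forall>x\<in>S. x \<le> p" "\<forall>x\<in>T. p \<le> x"
    and S_le: "integrals_le f S B1" and T_le: "integrals_le f T B2"
  shows "integrals_le f (S \<union> T) (B1 + B2)"
  unfolding integrals_le_def
proof (intro ballI impI)
  fix u v assume u: "u \<in> S \<union> T" and v: "v \<in> S \<union> T" and uv: "u \<le> v"
  have B1: "0 \<le> B1" and B2: "0 \<le> B2"
    using integrals_le_nonneg[OF S_le p(1)] integrals_le_nonneg[OF T_le p(2)] .
  consider "u \<in> S" "v \<in> S" | "u \<in> T" "v \<in> T" | "u \<in> S" "v \<in> T" "u \<le> p" "p \<le> v"
    using u v uv p by (metis UnE order.antisym order.trans)
  thus "cmod (integral {u..v} f) \<le> B1 + B2"
  proof cases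
    case 1
    thus ?thesis using S_le uv B2 unfolding integrals_le_def by force
  next
    case 2
    thus ?thesis using T_le uv B1 unfolding integrals_le_def by force
  next
    case 3
    have "0 < u"
      using 3 ST by auto
    hence "integral {u..v} f = integral {u..p} f + integral {p..v} f"
      using 3 by (intro Henstock_Kurzweil_Integration.integral_combine[symmetric]
          integrable_on_pos_interval[OF cont]) auto
    moreover have "cmod (integral {u..p} f) \<le> B1" "cmod (integral {p..v} f) \<le> B2"
      using S_le T_le 3 p unfolding integrals_le_def by auto
    ultimately show ?thesis
      by (simp add: norm_triangle_le)
  qed
qed

lemma integrals_le_join_atLeast:
  assumes "continuous_on {0<..} f" "0 < a" "a \<le> p" "integrals_le f {a..p} B1" "integrals_le f {p..} B2"
  shows "integrals_le f {a..} (B1 + B2)"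
proof -
  have "integrals_le f ({a..p} \<union> {p..}) (B1 + B2)"
    by (rule integrals_le_join[where p=p, OF assms(1) _ _ _ _ _ _ assms(4,5)]) (use assms(2,3) in auto)
  moreover have "{a..p} \<union> {p..} = {a..}"
    using assms(3) by auto
  ultimately show ?thesis
    by simp
qed

lemma integrals_le_join_greaterThan:
  assumes "continuous_on {0<..} f" "0 < p" "integrals_le f {0<..p} B1" "integrals_le f {p..} B2"
  shows "integrals_le f {0<..} (B1 + B2)"
proof -
  have "integrals_le f ({0<..p} \<union> {p..}) (B1 + B2)"
    by (rule integrals_le_join[where p=p, OF assms(1) _ _ _ _ _ _ assms(3,4)]) (use assms(2) in auto)
  moreover have "{0<..p} \<union> {p..} = {0<..}"
    using assms(2) by auto
  ultimately show ?thesis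
    by simp
qed

lemma integrals_le_antiderivative:
  assumes S: "S \<subseteq> {0<..}" "\<forall>u\<in>S. \<forall>v\<in>S. {u..v} \<subseteq> S"
    and cont: "continuous_on {0<..} f"
    and f_le: "\<And>t. t \<in> S \<Longrightarrow> cmod (f t) \<le> g t"
    and G: "\<And>t. t \<in> S \<Longrightarrow> (G has_real_derivative g t) (at t)"
    and G_incr_le: "\<And>u v. u \<in> S \<Longrightarrow> v \<in> S \<Longrightarrow> u \<le> v \<Longrightarrow> G v - G u \<le> B"
  shows "integrals_le f S B"
  unfolding integrals_le_def
proof (intro ballI impI)
  fix u v assume uv: "u \<in> S" "v \<in> S" "u \<le> v"
  hence sub: "{u..v} \<subseteq> S"
    using S by auto
  have "0 < u"
    using uv S by auto
  have g_int: "(g has_integral G v - G u) {u..v}"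
  proof (rule fundamental_theorem_of_calculus[OF uv(3)])
    fix x assume "x \<in> {u..v}"
    hence "x \<in> S"
      using sub by auto
    thus "(G has_vector_derivative g x) (at x within {u..v})"
      using G[of x]
      by (auto simp: has_real_derivative_iff_has_vector_derivative intro: has_vector_derivative_at_within)
  qed
  have "cmod (integral {u..v} f) \<le> integral {u..v} g"
    by (rule integral_norm_bound_integral)
      (use integrable_on_pos_interval[OF cont \<open>0<u\<close>] g_int f_le sub in auto)
  also have "\<dots> = G v - G u"
    using g_int by (simp add: has_integral_iff)
  also have "\<dots> \<le> B"
    using G_incr_le uv by auto
  finally show "cmod (integral {u..v} f) \<le> B" .
qed

section \<open>A first derivative test\<close>

lemma norm_integral_le_variation:
  fixes g :: "real \<Rightarrow> complex" and h h' :: "real \<Rightarrow> real"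
  assumes uv: "u \<le> v" and g: "g integrable_on {u..v}"
    and h: "\<And>t. t \<in> {u..v} \<Longrightarrow> (h has_real_derivative h' t) (at t)"
    and g_le: "\<And>t. t \<in> {u..v} \<Longrightarrow> cmod (g t) \<le> \<bar>h' t\<bar>"
    and sgn: "(\<forall>t\<in>{u..v}. 0 \<le> h' t) \<or> (\<forall>t\<in>{u..v}. h' t \<le> 0)"
  shows "cmod (integral {u..v} g) \<le> \<bar>h v - h u\<bar>"
proof -
  obtain s :: real where s: "\<bar>s\<bar> = 1" "\<And>t. t \<in> {u..v} \<Longrightarrow> \<bar>h' t\<bar> = s * h' t"
    using sgn by (metis abs_of_nonneg abs_of_nonpos abs_one abs_minus_cancel mult_1 mult_minus1)
  have "(h' has_integral h v - h u) {u..v}"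
    by (rule fundamental_theorem_of_calculus[OF uv])
      (use h in \<open>auto simp: has_real_derivative_iff_has_vector_derivative
         intro: has_vector_derivative_at_within\<close>)
  hence sh_int: "((\<lambda>t. s * h' t) has_integral s * (h v - h u)) {u..v}"
    by (rule has_integral_mult_right)
  have "cmod (integral {u..v} g) \<le> integral {u..v} (\<lambda>t. s * h' t)"
    by (rule integral_norm_bound_integral[OF g]) (use sh_int g_le s(2) in auto)
  also have "\<dots> = s * (h v - h u)"
    using sh_int by (simp add: has_integral_iff)
  also have "\<dots> \<le> \<bar>h v - h u\<bar>"
    using s(1) by (metis abs_ge_self abs_mult mult_1)
  finally show ?thesis .
qed

lemma integral_cis_div_by_parts:
  fixes \<phi> \<psi> h' :: "real \<Rightarrow> real"
  assumes u: "0 < u" "u \<le> v"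
    and d\<phi>: "\<And>t. t \<in> {u..v} \<Longrightarrow> (\<phi> has_real_derivative \<psi> t / t) (at t)"
    and \<psi>_nz: "\<And>t. t \<in> {u..v} \<Longrightarrow> \<psi> t \<noteq> 0"
    and dh: "\<And>t. t \<in> {u..v} \<Longrightarrow> ((\<lambda>t. 1 / \<psi> t) has_real_derivative h' t) (at t)"
    and cont_h': "continuous_on {u..v} h'"
  shows "integral {u..v} (\<lambda>t. cis (\<phi> t) / complex_of_real t)
           = - \<i> * (cis (\<phi> v) / complex_of_real (\<psi> v) - cis (\<phi> u) / complex_of_real (\<psi> u)
                    - integral {u..v} (\<lambda>t. cis (\<phi> t) * complex_of_real (h' t)))"
proof -
  define g where "g t = cis (\<phi> t) * complex_of_real (h' t)" for t
  define H where "H t = cis (\<phi> t) * complex_of_real (1 / \<psi> t)" for t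
  have "continuous_on {u..v} \<phi>"
    by (rule continuous_at_imp_continuous_on) (use d\<phi> DERIV_continuous in blast)
  hence g_int: "g integrable_on {u..v}"
    unfolding g_def cis_conv_exp by (intro integrable_continuous_interval continuous_intros cont_h')
  have dH: "(H has_vector_derivative \<i> * (cis (\<phi> t) / complex_of_real t) + g t) (at t within {u..v})"
    if t: "t \<in> {u..v}" for t
  proof -
    have "(H has_vector_derivative cis (\<phi> t) * complex_of_real (h' t)
        + (\<i> * complex_of_real (\<psi> t / t) * cis (\<phi> t)) * complex_of_real (1 / \<psi> t)) (at t)"
      unfolding H_def
      by (rule has_vector_derivative_mult has_vector_derivative_cis_comp d\<phi>
          has_vector_derivative_of_real dh t)+
    moreover have "cis (\<phi> t) * complex_of_real (h' t)
        + (\<i> * complex_of_real (\<psi> t / t) * cis (\<phi> t)) * complex_of_real (1 / \<psi> t)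
        = \<i> * (cis (\<phi> t) / complex_of_real t) + g t"
      unfolding g_def using \<psi>_nz[OF t] by (simp add: field_simps)
    ultimately show ?thesis
      by (simp add: has_vector_derivative_at_within)
  qed
  have "((\<lambda>t. - \<i> * ((\<i> * (cis (\<phi> t) / complex_of_real t) + g t) - g t))
      has_integral - \<i> * ((H v - H u) - integral {u..v} g)) {u..v}"
    by (intro has_integral_mult_right has_integral_diff fundamental_theorem_of_calculus[OF u(2) dH]
        integrable_integral g_int)
  thus ?thesis
    unfolding H_def g_def by (simp add: has_integral_iff)
qed

text \<open>Integrate by parts against \<open>cis \<phi> / \<psi>\<close>, where \<open>\<phi>' = \<psi> / t\<close>; as \<open>\<psi>\<close> is monotone,
  the total variation of \<open>1 / \<psi>\<close> is at most \<open>2 / m\<close>.\<close>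

lemma first_derivative_test:
  fixes \<phi> \<psi> \<psi>' :: "real \<Rightarrow> real"
  assumes u: "0 < u" "u \<le> v" and m: "0 < m"
    and d\<phi>: "\<And>t. t \<in> {u..v} \<Longrightarrow> (\<phi> has_real_derivative \<psi> t / t) (at t)"
    and d\<psi>: "\<And>t. t \<in> {u..v} \<Longrightarrow> (\<psi> has_real_derivative \<psi>' t) (at t)"
    and cont_\<psi>': "continuous_on {u..v} \<psi>'"
    and \<psi>_ge: "\<And>t. t \<in> {u..v} \<Longrightarrow> m \<le> \<bar>\<psi> t\<bar>"
    and sgn: "(\<forall>t\<in>{u..v}. 0 \<le> \<psi>' t) \<or> (\<forall>t\<in>{u..v}. \<psi>' t \<le> 0)"
  shows "cmod (integral {u..v} (\<lambda>t. cis (\<phi> t) / complex_of_real t)) \<le> 4 / m"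
proof -
  have \<psi>_nz: "\<psi> t \<noteq> 0" if "t \<in> {u..v}" for t
    using \<psi>_ge[OF that] m by auto
  define h' where "h' t = - \<psi>' t / (\<psi> t * \<psi> t)" for t
  have dh: "((\<lambda>t. 1 / \<psi> t) has_real_derivative h' t) (at t)" if "t \<in> {u..v}" for t
    unfolding h'_def using DERIV_inverse_fun[OF d\<psi>[OF that] \<psi>_nz[OF that]]
    by (simp add: inverse_eq_divide power2_eq_square)
  have "continuous_on {u..v} \<psi>"
    by (rule continuous_at_imp_continuous_on) (use d\<psi> DERIV_continuous in blast)
  hence cont_h': "continuous_on {u..v} h'"
    unfolding h'_def by (intro continuous_intros cont_\<psi>') (use \<psi>_nz in auto)
  have h'_sgn: "(\<forall>t\<in>{u..v}. 0 \<le> h' t) \<or> (\<forall>t\<in>{u..v}. h' t \<le> 0)"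
    using sgn unfolding h'_def by (auto simp: divide_nonpos_nonneg)
  have "continuous_on {u..v} \<phi>"
    by (rule continuous_at_imp_continuous_on) (use d\<phi> DERIV_continuous in blast)
  hence "cmod (integral {u..v} (\<lambda>t. cis (\<phi> t) * complex_of_real (h' t))) \<le> \<bar>1 / \<psi> v - 1 / \<psi> u\<bar>"
    by (intro norm_integral_le_variation[OF u(2) _ dh _ h'_sgn] integrable_continuous_interval)
      (auto simp: norm_mult cis_conv_exp intro!: continuous_intros cont_h')
  also have "\<dots> \<le> \<bar>1 / \<psi> v\<bar> + \<bar>1 / \<psi> u\<bar>"
    by (rule abs_triangle_ineq4)
  also have "\<dots> \<le> 1 / m + 1 / m"
    using \<psi>_ge[of u] \<psi>_ge[of v] u m by (intro add_mono) (simp_all add: frac_le)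
  finally have I_le: "cmod (integral {u..v} (\<lambda>t. cis (\<phi> t) * complex_of_real (h' t))) \<le> 2 / m"
    by simp
  have H_le: "cmod (cis (\<phi> t) / complex_of_real (\<psi> t)) \<le> 1 / m" if "t \<in> {u..v}" for t
    using \<psi>_ge[OF that] m by (simp add: norm_divide frac_le)
  define I where "I = integral {u..v} (\<lambda>t. cis (\<phi> t) * complex_of_real (h' t))"
  have "cmod (integral {u..v} (\<lambda>t. cis (\<phi> t) / complex_of_real t))
      = cmod (cis (\<phi> v) / complex_of_real (\<psi> v) - cis (\<phi> u) / complex_of_real (\<psi> u) - I)"
    using integral_cis_div_by_parts[OF u d\<phi> \<psi>_nz dh cont_h'] by (simp add: norm_mult I_def)
  also have "\<dots> \<le> cmod (cis (\<phi> v) / complex_of_real (\<psi> v)) + cmod (cis (\<phi> u) / complex_of_real (\<psi> u))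
      + cmod I"
    by (metis add_right_mono norm_triangle_ineq4 order_trans)
  also have "\<dots> \<le> 1 / m + 1 / m + 2 / m"
    using H_le[of u] H_le[of v] I_le u unfolding I_def by (intro add_mono) auto
  finally show ?thesis
    by simp
qed

section \<open>The oscillatory kernel\<close>

definition osc_kernel :: "real \<Rightarrow> real \<Rightarrow> real \<Rightarrow> real \<Rightarrow> complex" where
  "osc_kernel b \<alpha> \<gamma> t = cis (- (t * \<alpha> + \<gamma> * t powr b)) / complex_of_real t"

lemma continuous_on_osc_kernel: "continuous_on {0<..} (osc_kernel b \<alpha> \<gamma>)"
  unfolding osc_kernel_def cis_conv_exp by (intro continuous_intros) auto

lemma continuous_on_osc_kernel_diff:
  "continuous_on {0<..} (\<lambda>t. osc_kernel b \<alpha> \<gamma> t - osc_kernel b \<alpha>' \<gamma>' t)"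
  by (intro continuous_on_diff continuous_on_osc_kernel)

lemma norm_osc_kernel: "0 < t \<Longrightarrow> cmod (osc_kernel b \<alpha> \<gamma> t) = 1 / t"
  unfolding osc_kernel_def by (simp add: norm_divide)

lemma cnj_osc_kernel: "cnj (osc_kernel b \<alpha> \<gamma> t) = osc_kernel b (- \<alpha>) (- \<gamma>) t"
  unfolding osc_kernel_def by (simp add: cis_cnj)

lemma powr_eq_mult_powr_minus_one: "0 < (t::real) \<Longrightarrow> t powr b = t * t powr (b - 1)"
  by (simp add: powr_diff)

lemma norm_osc_kernel_diff_le:
  assumes "0 < t"
  shows "cmod (osc_kernel b \<alpha> \<gamma> t - osc_kernel b \<alpha>' \<gamma>' t) \<le> \<bar>\<alpha> - \<alpha>'\<bar> + \<bar>\<gamma> - \<gamma>'\<bar> * t powr (b - 1)"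
proof -
  have "cmod (osc_kernel b \<alpha> \<gamma> t - osc_kernel b \<alpha>' \<gamma>' t)
      = cmod (cis (- (t * \<alpha> + \<gamma> * t powr b)) - cis (- (t * \<alpha>' + \<gamma>' * t powr b))) / t"
    unfolding osc_kernel_def using assms by (simp add: norm_divide flip: diff_divide_distrib)
  also have "\<dots> \<le> \<bar>t * (\<alpha> - \<alpha>') + (\<gamma> - \<gamma>') * t powr b\<bar> / t"
  proof (rule divide_right_mono)
    have "(- (t * \<alpha> + \<gamma> * t powr b)) - (- (t * \<alpha>' + \<gamma>' * t powr b))
        = - (t * (\<alpha> - \<alpha>') + (\<gamma> - \<gamma>') * t powr b)"
      by (simp add: algebra_simps)
    thus "cmod (cis (- (t * \<alpha> + \<gamma> * t powr b)) - cis (- (t * \<alpha>' + \<gamma>' * t powr b)))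
        \<le> \<bar>t * (\<alpha> - \<alpha>') + (\<gamma> - \<gamma>') * t powr b\<bar>"
      using norm_cis_diff_le[of "- (t * \<alpha> + \<gamma> * t powr b)" "- (t * \<alpha>' + \<gamma>' * t powr b)"]
      by simp
  qed (use assms in simp)
  also have "\<dots> \<le> (t * \<bar>\<alpha> - \<alpha>'\<bar> + \<bar>\<gamma> - \<gamma>'\<bar> * t powr b) / t"
    using assms abs_triangle_ineq[of "t * (\<alpha> - \<alpha>')" "(\<gamma> - \<gamma>') * t powr b"]
    by (intro divide_right_mono) (auto simp: abs_mult)
  also have "\<dots> = \<bar>\<alpha> - \<alpha>'\<bar> + \<bar>\<gamma> - \<gamma>'\<bar> * t powr (b - 1)"
    using assms by (simp add: powr_eq_mult_powr_minus_one[OF assms, of b] field_simps)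
  finally show ?thesis .
qed

text \<open>The first derivative test for the phase \<open>-(\<alpha> t + \<gamma> t^b)\<close>, with \<open>\<psi> t = -(\<alpha> t + b \<gamma> t^b)\<close>.\<close>

lemma osc_kernel_nonstationary:
  assumes b: "b > 1" and S: "S \<subseteq> {0<..}" "\<forall>u\<in>S. \<forall>v\<in>S. {u..v} \<subseteq> S" and m: "m > 0"
    and \<psi>_ge: "\<And>t. t \<in> S \<Longrightarrow> m \<le> \<bar>\<alpha> * t + b * \<gamma> * t powr b\<bar>"
    and sgn: "(\<forall>t\<in>S. 0 \<le> \<alpha> + b * b * \<gamma> * t powr (b - 1))
              \<or> (\<forall>t\<in>S. \<alpha> + b * b * \<gamma> * t powr (b - 1) \<le> 0)"
  shows "integrals_le (osc_kernel b \<alpha> \<gamma>) S (4 / m)"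
  unfolding integrals_le_def
proof (intro ballI impI)
  fix u v assume uv: "u \<in> S" "v \<in> S" "u \<le> v"
  have sub: "{u..v} \<subseteq> S"
    using S uv by auto
  have u0: "0 < u"
    using uv S by auto
  define \<phi> where "\<phi> t = - (t * \<alpha> + \<gamma> * t powr b)" for t
  define \<psi> where "\<psi> t = - (\<alpha> * t + b * \<gamma> * t powr b)" for t
  define \<psi>' where "\<psi>' t = - (\<alpha> + b * b * \<gamma> * t powr (b - 1))" for t
  have "cmod (integral {u..v} (\<lambda>t. cis (\<phi> t) / complex_of_real t)) \<le> 4 / m"
  proof (rule first_derivative_test[OF u0 uv(3) m])
    fix t assume t: "t \<in> {u..v}"
    hence t0: "0 < t"
      using u0 by auto
    have "(\<phi> has_real_derivative - (1 * \<alpha> + \<gamma> * (b * t powr (b - 1)))) (at t)"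
      unfolding \<phi>_def
      by (intro DERIV_minus DERIV_add DERIV_cmult_right DERIV_cmult DERIV_ident
          has_real_derivative_powr[OF t0])
    moreover have "- (1 * \<alpha> + \<gamma> * (b * t powr (b - 1))) = \<psi> t / t"
      unfolding \<psi>_def using t0 by (simp add: powr_eq_mult_powr_minus_one[OF t0, of b] field_simps)
    ultimately show "(\<phi> has_real_derivative \<psi> t / t) (at t)"
      by simp
    have "(\<psi> has_real_derivative - (\<alpha> * 1 + b * \<gamma> * (b * t powr (b - 1)))) (at t)"
      unfolding \<psi>_def
      by (intro DERIV_minus DERIV_add DERIV_cmult_right DERIV_cmult DERIV_ident
          has_real_derivative_powr[OF t0])
    thus "(\<psi> has_real_derivative \<psi>' t) (at t)"
      unfolding \<psi>'_def by (simp add: algebra_simps)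
    show "m \<le> \<bar>\<psi> t\<bar>"
      using \<psi>_ge[of t] sub t unfolding \<psi>_def by auto
  next
    show "continuous_on {u..v} \<psi>'"
      unfolding \<psi>'_def by (intro continuous_intros) (use u0 in auto)
  next
    show "(\<forall>t\<in>{u..v}. 0 \<le> \<psi>' t) \<or> (\<forall>t\<in>{u..v}. \<psi>' t \<le> 0)"
      using sgn sub unfolding \<psi>'_def by force
  qed
  moreover have "osc_kernel b \<alpha> \<gamma> = (\<lambda>t. cis (\<phi> t) / complex_of_real t)"
    unfolding osc_kernel_def \<phi>_def by auto
  ultimately show "cmod (integral {u..v} (osc_kernel b \<alpha> \<gamma>)) \<le> 4 / m"
    by simp
qed

lemma osc_kernel_diff_near_zero:
  assumes b: "b > 1" and a: "a > 0"
  shows "integrals_le (\<lambda>t. osc_kernel b \<alpha> \<gamma> t - osc_kernel b \<alpha>' \<gamma>' t) {0<..a}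
           ((\<bar>\<alpha> - \<alpha>'\<bar> + \<bar>\<gamma> - \<gamma>'\<bar> * a powr (b - 1)) * a)"
proof -
  define M where "M = \<bar>\<alpha> - \<alpha>'\<bar> + \<bar>\<gamma> - \<gamma>'\<bar> * a powr (b - 1)"
  have M0: "0 \<le> M"
    unfolding M_def by simp
  show ?thesis
    unfolding M_def[symmetric]
  proof (rule integrals_le_antiderivative[where g = "\<lambda>_. M" and G = "\<lambda>t. M * t"])
    fix t assume t: "t \<in> {0<..a}"
    have "t powr (b - 1) \<le> a powr (b - 1)"
      using t b by (intro powr_mono2) auto
    hence "\<bar>\<gamma> - \<gamma>'\<bar> * t powr (b - 1) \<le> \<bar>\<gamma> - \<gamma>'\<bar> * a powr (b - 1)"
      by (rule mult_left_mono) simp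
    thus "cmod (osc_kernel b \<alpha> \<gamma> t - osc_kernel b \<alpha>' \<gamma>' t) \<le> M"
      using norm_osc_kernel_diff_le[of t b \<alpha> \<gamma> \<alpha>' \<gamma>'] t unfolding M_def by auto
    show "((\<lambda>t. M * t) has_real_derivative M) (at t)"
      using DERIV_cmult[OF DERIV_ident, of M] by simp
  next
    fix u v assume "u \<in> {0<..a}" "v \<in> {0<..a}" "u \<le> v"
    hence "M * v \<le> M * a" "0 \<le> M * u"
      using M0 by (auto simp: mult_left_mono)
    thus "M * v - M * u \<le> M * a"
      by linarith
  qed (auto intro: continuous_on_osc_kernel_diff)
qed

lemma osc_kernel_log_bound:
  assumes "0 < A" "A \<le> B"
  shows "integrals_le (osc_kernel b \<alpha> \<gamma>) {A..B} (ln B - ln A)"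
proof (rule integrals_le_antiderivative[where g = "\<lambda>t. 1 / t" and G = ln])
  fix t assume "t \<in> {A..B}"
  hence "0 < t"
    using assms by auto
  thus "cmod (osc_kernel b \<alpha> \<gamma> t) \<le> 1 / t" "(ln has_real_derivative 1 / t) (at t)"
    by (auto simp: norm_osc_kernel DERIV_ln_divide)
next
  fix u v assume "u \<in> {A..B}" "v \<in> {A..B}" "u \<le> v"
  hence "ln v \<le> ln B" "ln A \<le> ln u"
    using assms by auto
  thus "ln v - ln u \<le> ln B - ln A"
    by linarith
qed (use assms in \<open>auto intro: continuous_on_osc_kernel\<close>)

lemma abs_le_abs_add_same_sign: "0 \<le> x * y \<Longrightarrow> \<bar>x\<bar> \<le> \<bar>x + (y::real)\<bar>"
  by (cases "0 \<le> x") (auto simp: zero_le_mult_iff)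

lemma osc_kernel_tail_same_sign:
  assumes b: "b > 1" and \<alpha>: "\<alpha> \<noteq> 0" "0 \<le> \<alpha> * \<gamma>" and A: "A > 0"
  shows "integrals_le (osc_kernel b \<alpha> \<gamma>) {A..} (4 / (\<bar>\<alpha>\<bar> * A))"
proof (rule osc_kernel_nonstationary[OF b])
  show "0 < \<bar>\<alpha>\<bar> * A"
    using \<alpha> A by auto
next
  fix t assume t: "t \<in> {A..}"
  have "(\<alpha> * t) * (b * \<gamma> * t powr b) = (\<alpha> * \<gamma>) * (b * t * t powr b)"
    by (simp add: ac_simps)
  also have "\<dots> \<ge> 0"
    using \<alpha>(2) b t A by simp
  finally have "\<bar>\<alpha> * t\<bar> \<le> \<bar>\<alpha> * t + b * \<gamma> * t powr b\<bar>"
    by (rule abs_le_abs_add_same_sign)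
  moreover have "\<bar>\<alpha>\<bar> * A \<le> \<bar>\<alpha> * t\<bar>"
    using t A by (simp add: abs_mult mult_left_mono)
  ultimately show "\<bar>\<alpha>\<bar> * A \<le> \<bar>\<alpha> * t + b * \<gamma> * t powr b\<bar>"
    by linarith
next
  show "(\<forall>t\<in>{A..}. 0 \<le> \<alpha> + b * b * \<gamma> * t powr (b - 1))
      \<or> (\<forall>t\<in>{A..}. \<alpha> + b * b * \<gamma> * t powr (b - 1) \<le> 0)"
  proof (cases "0 < \<alpha>")
    case True
    hence "0 \<le> \<gamma>"
      using \<alpha> by (simp add: zero_le_mult_iff)
    thus ?thesis
      using True b by auto
  next
    case False
    hence "\<gamma> \<le> 0"
      using \<alpha> by (simp add: zero_le_mult_iff)
    thus ?thesis
      using False b by (auto simp: mult_nonneg_nonpos mult_nonpos_nonneg intro!: add_nonpos_nonpos)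
  qed
qed (use A in auto)

lemma osc_kernel_tail_power_dominant:
  assumes b: "b > 1" and \<gamma>: "\<gamma> \<noteq> 0" and A: "A > 0"
    and dominant: "\<bar>\<alpha>\<bar> \<le> \<bar>\<gamma>\<bar> * A powr (b - 1)"
  shows "integrals_le (osc_kernel b \<alpha> \<gamma>) {A..} (4 / ((b - 1) * \<bar>\<gamma>\<bar> * A powr b))"
proof -
  have dominant_t: "\<bar>\<alpha>\<bar> \<le> \<bar>\<gamma>\<bar> * t powr (b - 1)" if "t \<in> {A..}" for t
  proof -
    have "A powr (b - 1) \<le> t powr (b - 1)"
      using that A b by (intro powr_mono2) auto
    hence "\<bar>\<gamma>\<bar> * A powr (b - 1) \<le> \<bar>\<gamma>\<bar> * t powr (b - 1)"
      by (rule mult_left_mono) simp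
    thus ?thesis
      using dominant by linarith
  qed
  show ?thesis
  proof (rule osc_kernel_nonstationary[OF b])
    show "0 < (b - 1) * \<bar>\<gamma>\<bar> * A powr b"
      using b \<gamma> A by auto
  next
    fix t assume t: "t \<in> {A..}"
    have t0: "0 < t"
      using t A by auto
    have "\<bar>\<alpha> * t\<bar> \<le> \<bar>\<gamma>\<bar> * t powr b"
      using mult_right_mono[OF dominant_t[OF t], of t] t0
      by (simp add: abs_mult powr_eq_mult_powr_minus_one[OF t0, of b] mult_ac)
    moreover have "\<bar>b * \<gamma> * t powr b\<bar> = b * (\<bar>\<gamma>\<bar> * t powr b)"
      using b by (simp add: abs_mult)
    ultimately have "(b - 1) * \<bar>\<gamma>\<bar> * t powr b \<le> \<bar>\<alpha> * t + b * \<gamma> * t powr b\<bar>"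
      using abs_triangle_ineq[of "\<alpha> * t + b * \<gamma> * t powr b" "- (\<alpha> * t)"]
      by (simp add: algebra_simps)
    moreover have "(b - 1) * \<bar>\<gamma>\<bar> * A powr b \<le> (b - 1) * \<bar>\<gamma>\<bar> * t powr b"
      using t A b by (intro mult_left_mono powr_mono2) auto
    ultimately show "(b - 1) * \<bar>\<gamma>\<bar> * A powr b \<le> \<bar>\<alpha> * t + b * \<gamma> * t powr b\<bar>"
      by linarith
  next
    have bb: "1 \<le> b * b"
      using b mult_mono[of 1 b 1 b] by simp
    have dominant_b: "\<bar>\<alpha>\<bar> \<le> b * b * \<bar>\<gamma>\<bar> * t powr (b - 1)" if "t \<in> {A..}" for t
      using dominant_t[OF that] mult_right_mono[OF bb, of "\<bar>\<gamma>\<bar> * t powr (b - 1)"]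
      by (simp add: mult_ac)
    show "(\<forall>t\<in>{A..}. 0 \<le> \<alpha> + b * b * \<gamma> * t powr (b - 1))
        \<or> (\<forall>t\<in>{A..}. \<alpha> + b * b * \<gamma> * t powr (b - 1) \<le> 0)"
    proof (cases "0 < \<gamma>")
      case True
      have "0 \<le> \<alpha> + b * b * \<gamma> * t powr (b - 1)" if "t \<in> {A..}" for t
        using dominant_b[OF that] True by (simp add: abs_le_iff)
      thus ?thesis
        by blast
    next
      case False
      hence "\<gamma> < 0"
        using \<gamma> by simp
      hence "\<alpha> + b * b * \<gamma> * t powr (b - 1) \<le> 0" if "t \<in> {A..}" for t
        using dominant_b[OF that] by (simp add: abs_le_iff)
      thus ?thesis
        by blast
    qed
  qed (use A in auto)
qed

lemma osc_kernel_rescale: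
  assumes c: "0 < c" and t: "0 < t"
  shows "osc_kernel b (\<alpha> / c) (\<gamma> / c powr b) (c * t) = (1 / c) *\<^sub>R osc_kernel b \<alpha> \<gamma> t"
proof -
  have "(c * t) powr b = c powr b * t powr b"
    using c t by (simp add: powr_mult)
  hence "c * t * (\<alpha> / c) + \<gamma> / c powr b * (c * t) powr b = t * \<alpha> + \<gamma> * t powr b"
    using c by (simp add: field_simps)
  thus ?thesis
    unfolding osc_kernel_def using c t by (simp add: scaleR_conv_of_real)
qed

lemma integral_osc_kernel_rescale:
  assumes c: "0 < c" and u: "0 < u"
  shows "integral {u..v} (osc_kernel b \<alpha> \<gamma>) = integral {c * u..c * v} (osc_kernel b (\<alpha> / c) (\<gamma> / c powr b))"
proof -
  define f where "f = osc_kernel b (\<alpha> / c) (\<gamma> / c powr b)"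
  have "(1 / c) *\<^sub>R integral {u..v} (osc_kernel b \<alpha> \<gamma>) = integral {u..v} (\<lambda>t. (1 / c) *\<^sub>R osc_kernel b \<alpha> \<gamma> t)"
    by (rule integral_cmul[symmetric])
  also have "\<dots> = integral {u..v} (\<lambda>t. f (c * t))"
    unfolding f_def by (rule integral_cong) (use c u osc_kernel_rescale in auto)
  also have "\<dots> = (1 / c) *\<^sub>R integral {c * u..c * v} f"
    using integral_stretch_real[of c "c * u" "c * v" f] c by (simp add: image_divide_atLeastAtMost)
  finally show ?thesis
    unfolding f_def using c by simp
qed

lemma integrals_le_osc_kernel_diff_rescale:
  assumes c: "0 < c"
    and le: "integrals_le (\<lambda>t. osc_kernel b (\<alpha> / c) (\<gamma> / c powr b) t
                               - osc_kernel b (\<alpha>' / c) (\<gamma>' / c powr b) t) {0<..} B"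
  shows "integrals_le (\<lambda>t. osc_kernel b \<alpha> \<gamma> t - osc_kernel b \<alpha>' \<gamma>' t) {0<..} B"
  unfolding integrals_le_def
proof (intro ballI impI)
  fix u v :: real assume uv: "u \<in> {0<..}" "v \<in> {0<..}" "u \<le> v"
  hence u0: "0 < u"
    by simp
  have "integral {u..v} (\<lambda>t. osc_kernel b \<alpha> \<gamma> t - osc_kernel b \<alpha>' \<gamma>' t)
      = integral {u..v} (osc_kernel b \<alpha> \<gamma>) - integral {u..v} (osc_kernel b \<alpha>' \<gamma>')"
    by (intro integral_diff integrable_on_pos_interval[OF continuous_on_osc_kernel u0])
  also have "\<dots> = integral {c * u..c * v} (osc_kernel b (\<alpha> / c) (\<gamma> / c powr b))
      - integral {c * u..c * v} (osc_kernel b (\<alpha>' / c) (\<gamma>' / c powr b))"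
    using integral_osc_kernel_rescale[OF c u0] by simp
  also have "\<dots> = integral {c * u..c * v}
      (\<lambda>t. osc_kernel b (\<alpha> / c) (\<gamma> / c powr b) t - osc_kernel b (\<alpha>' / c) (\<gamma>' / c powr b) t)"
    using c u0 by (intro integral_diff[symmetric] integrable_on_pos_interval[OF continuous_on_osc_kernel]) auto
  finally show "cmod (integral {u..v} (\<lambda>t. osc_kernel b \<alpha> \<gamma> t - osc_kernel b \<alpha>' \<gamma>' t)) \<le> B"
    using le uv c unfolding integrals_le_def by (simp add: mult_left_mono)
qed

lemma integrals_le_osc_kernel_diff_cnj:
  assumes "integrals_le (\<lambda>t. osc_kernel b (- \<alpha>) (- \<gamma>) t - osc_kernel b (- \<alpha>') (- \<gamma>') t) S B"
  shows "integrals_le (\<lambda>t. osc_kernel b \<alpha> \<gamma> t - osc_kernel b \<alpha>' \<gamma>' t) S B"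
  using integrals_le_cnj[OF assms] by (simp add: cnj_osc_kernel)

section \<open>The kernel near its stationary point\<close>

lemma ratio_powr_le:
  fixes p t t0 c :: real
  assumes p: "p > 0" and t: "0 < t" and t0: "0 < t0" and c: "0 < c" and le: "t \<le> t0 * c powr (1 / p)"
  shows "(t / t0) powr p \<le> c"
proof -
  have "t / t0 \<le> c powr (1 / p)"
    using le t0 by (simp add: divide_le_eq mult.commute)
  hence "(t / t0) powr p \<le> (c powr (1 / p)) powr p"
    using p t t0 by (intro powr_mono2) auto
  also have "\<dots> = c"
    using p c by (simp add: powr_powr)
  finally show ?thesis .
qed

lemma ratio_powr_ge:
  fixes p t t0 c :: real
  assumes p: "p > 0" and t: "0 < t" and t0: "0 < t0" and c: "0 < c" and le: "t0 * c powr (1 / p) \<le> t"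
  shows "c \<le> (t / t0) powr p"
proof -
  have "c powr (1 / p) \<le> t / t0"
    using le t0 by (simp add: le_divide_eq mult.commute)
  hence "(c powr (1 / p)) powr p \<le> (t / t0) powr p"
    using p t t0 by (intro powr_mono2) auto
  moreover have "(c powr (1 / p)) powr p = c"
    using p c by (simp add: powr_powr)
  ultimately show ?thesis
    by simp
qed

text \<open>For \<open>\<kappa> = 1 / (b t0^(b-1))\<close> the phase \<open>t - \<kappa> t^b\<close> is stationary at \<open>t0\<close>, and the
  function \<open>\<psi>\<close> of the first derivative test changes monotonicity at \<open>t1 = t0 (1/b)^(1/(b-1))\<close>.\<close>

lemma stationary_phase_identities:
  fixes b t t0 \<kappa> :: real
  assumes b: "b > 1" and t: "0 < t" and t0: "0 < t0" and \<kappa>: "\<kappa> = 1 / (b * t0 powr (b - 1))"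
  shows "1 * t + b * (- \<kappa>) * t powr b = t * (1 - (t / t0) powr (b - 1))"
    and "1 + b * b * (- \<kappa>) * t powr (b - 1) = 1 - b * (t / t0) powr (b - 1)"
proof -
  have pos: "0 < t0 powr (b - 1)"
    using t0 by simp
  have "b * \<kappa> * t powr b = t * (t powr (b - 1) / t0 powr (b - 1))"
    unfolding \<kappa> powr_eq_mult_powr_minus_one[OF t, of b] using b pos by (simp add: field_simps)
  thus "1 * t + b * (- \<kappa>) * t powr b = t * (1 - (t / t0) powr (b - 1))"
    by (simp add: powr_divide algebra_simps)
  have "b * b * \<kappa> * t powr (b - 1) = b * (t powr (b - 1) / t0 powr (b - 1))"
    unfolding \<kappa> using b pos by (simp add: field_simps)
  thus "1 + b * b * (- \<kappa>) * t powr (b - 1) = 1 - b * (t / t0) powr (b - 1)"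
    by (simp add: powr_divide)
qed

lemma osc_kernel_before_turning_point:
  assumes b: "b > 1" and t0: "0 < t0" and \<kappa>: "\<kappa> = 1 / (b * t0 powr (b - 1))" and A: "0 < A"
  shows "integrals_le (osc_kernel b 1 (- \<kappa>)) {A..t0 * (1 / b) powr (1 / (b - 1))} (4 / (A * (1 - 1 / b)))"
proof (rule osc_kernel_nonstationary[OF b])
  have ratio_le: "(t / t0) powr (b - 1) \<le> 1 / b" if "t \<in> {A..t0 * (1 / b) powr (1 / (b - 1))}" for t
    using ratio_powr_le[of "b - 1" t t0 "1 / b"] that A t0 b by auto
  fix t assume t: "t \<in> {A..t0 * (1 / b) powr (1 / (b - 1))}"
  hence "0 < t"
    using A by auto
  have "A * (1 - 1 / b) \<le> t * (1 - (t / t0) powr (b - 1))"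
    using ratio_le[OF t] t b A by (intro mult_mono) auto
  thus "A * (1 - 1 / b) \<le> \<bar>1 * t + b * (- \<kappa>) * t powr b\<bar>"
    unfolding stationary_phase_identities(1)[OF b \<open>0 < t\<close> t0 \<kappa>] by linarith
next
  have "0 \<le> 1 + b * b * (- \<kappa>) * t powr (b - 1)" if t: "t \<in> {A..t0 * (1 / b) powr (1 / (b - 1))}" for t
  proof -
    have "0 < t"
      using t A by auto
    have "(t / t0) powr (b - 1) \<le> 1 / b"
      using ratio_powr_le[of "b - 1" t t0 "1 / b"] t A t0 b by auto
    hence "b * (t / t0) powr (b - 1) \<le> 1"
      using b by (simp add: field_simps)
    thus ?thesis
      unfolding stationary_phase_identities(2)[OF b \<open>0 < t\<close> t0 \<kappa>] by simp
  qed
  thus "(\<forall>t\<in>{A..t0 * (1 / b) powr (1 / (b - 1))}. 0 \<le> 1 + b * b * (- \<kappa>) * t powr (b - 1))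
      \<or> (\<forall>t\<in>{A..t0 * (1 / b) powr (1 / (b - 1))}. 1 + b * b * (- \<kappa>) * t powr (b - 1) \<le> 0)"
    by blast
qed (use A b in auto)

lemma osc_kernel_after_turning_point:
  assumes b: "b > 1" and t0: "0 < t0" and \<kappa>: "\<kappa> = 1 / (b * t0 powr (b - 1))"
    and S: "S \<subseteq> {t0 * (1 / b) powr (1 / (b - 1))..}" "\<forall>u\<in>S. \<forall>v\<in>S. {u..v} \<subseteq> S" and m: "0 < m"
    and \<psi>_ge: "\<And>t. t \<in> S \<Longrightarrow> m \<le> t * \<bar>1 - (t / t0) powr (b - 1)\<bar>"
  shows "integrals_le (osc_kernel b 1 (- \<kappa>)) S (4 / m)"
proof -
  have t1: "0 < t0 * (1 / b) powr (1 / (b - 1))"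
    using t0 b by simp
  have pos: "0 < t" if "t \<in> S" for t
    using that S(1) t1 by force
  show ?thesis
  proof (rule osc_kernel_nonstationary[OF b _ S(2) m])
    show "S \<subseteq> {0<..}"
      using pos by auto
  next
    fix t assume t: "t \<in> S"
    show "m \<le> \<bar>1 * t + b * (- \<kappa>) * t powr b\<bar>"
      using \<psi>_ge[OF t] pos[OF t]
      unfolding stationary_phase_identities(1)[OF b pos[OF t] t0 \<kappa>] by (simp add: abs_mult)
  next
    have "1 + b * b * (- \<kappa>) * t powr (b - 1) \<le> 0" if t: "t \<in> S" for t
    proof -
      have "1 / b \<le> (t / t0) powr (b - 1)"
        using ratio_powr_ge[of "b - 1" t t0 "1 / b"] t S(1) pos[OF t] t0 b by auto
      hence "1 \<le> b * (t / t0) powr (b - 1)"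
        using b by (simp add: field_simps)
      thus ?thesis
        unfolding stationary_phase_identities(2)[OF b pos[OF t] t0 \<kappa>] by simp
    qed
    thus "(\<forall>t\<in>S. 0 \<le> 1 + b * b * (- \<kappa>) * t powr (b - 1)) \<or> (\<forall>t\<in>S. 1 + b * b * (- \<kappa>) * t powr (b - 1) \<le> 0)"
      by blast
  qed
qed

lemma ln_one_plus_minus_ln_one_minus_le:
  fixes \<theta> :: real
  assumes "0 < \<theta>" "\<theta> \<le> 1/2"
  shows "ln (1 + \<theta>) - ln (1 - \<theta>) \<le> 3 * \<theta>"
proof -
  have "ln (1 + \<theta>) \<le> \<theta>"
    using assms by (intro ln_add_one_self_le_self) auto
  moreover have "- \<theta> - 2 * \<theta>\<^sup>2 \<le> ln (1 - \<theta>)"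
    using assms by (intro ln_one_minus_pos_lower_bound) auto
  moreover have "2 * \<theta>\<^sup>2 \<le> \<theta>"
    using assms by (simp add: power2_eq_square)
  ultimately show ?thesis
    by linarith
qed

lemma osc_kernel_window_bound:
  fixes p t0 \<theta> :: real
  assumes p: "0 < p" and t0: "0 < t0" and \<theta>: "0 < \<theta>" "\<theta> \<le> 1/2"
  shows "integrals_le (osc_kernel b \<alpha> \<gamma>) {t0 * (1 - \<theta>) powr (1 / p)..t0 * (1 + \<theta>) powr (1 / p)} (3 * \<theta> / p)"
proof -
  have "integrals_le (osc_kernel b \<alpha> \<gamma>) {t0 * (1 - \<theta>) powr (1 / p)..t0 * (1 + \<theta>) powr (1 / p)}
      (ln (t0 * (1 + \<theta>) powr (1 / p)) - ln (t0 * (1 - \<theta>) powr (1 / p)))"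
    using p t0 \<theta> by (intro osc_kernel_log_bound mult_left_mono powr_mono2) auto
  moreover have "ln (t0 * (1 + \<theta>) powr (1 / p)) - ln (t0 * (1 - \<theta>) powr (1 / p))
      = (ln (1 + \<theta>) - ln (1 - \<theta>)) / p"
    using t0 \<theta> p by (simp add: ln_mult ln_powr field_simps)
  moreover have "(ln (1 + \<theta>) - ln (1 - \<theta>)) / p \<le> 3 * \<theta> / p"
    using ln_one_plus_minus_ln_one_minus_le[OF \<theta>] p by (simp add: divide_right_mono)
  ultimately show ?thesis
    by (metis integrals_le_mono order_refl)
qed

text \<open>Split \<open>[t1, \<infinity>)\<close> at \<open>t0 (1 \<plusminus> \<theta>)^(1/(b-1))\<close>: the window around \<open>t0\<close> costs its
  logarithmic length \<open>O(\<theta>)\<close>, the two outer parts are handled by the first derivative test.\<close>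

lemma osc_kernel_after_turning_point_window:
  fixes b t0 \<theta> :: real
  assumes b: "b > 1" and t0: "0 < t0" and \<kappa>: "\<kappa> = 1 / (b * t0 powr (b - 1))"
    and \<theta>: "0 < \<theta>" "\<theta> \<le> (1 - 1 / b) / 2"
  defines "t1 \<equiv> t0 * (1 / b) powr (1 / (b - 1))"
  shows "integrals_le (osc_kernel b 1 (- \<kappa>)) {t1..} (4 / (t1 * \<theta>) + 3 * \<theta> / (b - 1) + 4 / (t0 * \<theta>))"
proof -
  define p where "p = b - 1"
  have p: "p > 0"
    using b p_def by simp
  have "(1 - 1 / b) / 2 \<le> 1 / 2"
    using b by simp
  hence \<theta>_half: "\<theta> \<le> 1/2"
    using \<theta> by linarith
  define tL where "tL = t0 * (1 - \<theta>) powr (1 / p)"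
  define tR where "tR = t0 * (1 + \<theta>) powr (1 / p)"
  have t1_pos: "0 < t1"
    unfolding t1_def using t0 b by simp
  have "1 / b \<le> 1 - \<theta>"
    using \<theta> b by (simp add: field_simps)
  hence t1_tL: "t1 \<le> tL"
    unfolding t1_def tL_def p_def using t0 b \<theta>_half by (intro mult_left_mono powr_mono2) auto
  have tL_tR: "tL \<le> tR"
    unfolding tL_def tR_def using t0 \<theta> p \<theta>_half by (intro mult_left_mono powr_mono2) auto
  have t0_tR: "t0 \<le> tR"
    unfolding tR_def using t0 \<theta> p
    using mult_left_mono[of 1 "(1 + \<theta>) powr (1 / p)" t0] ge_one_powr_ge_zero[of "1 + \<theta>" "1 / p"] by auto
  have left: "integrals_le (osc_kernel b 1 (- \<kappa>)) {t1..tL} (4 / (t1 * \<theta>))"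
  proof (rule osc_kernel_after_turning_point[OF b t0 \<kappa>])
    fix t assume t: "t \<in> {t1..tL}"
    hence "(t / t0) powr p \<le> 1 - \<theta>"
      using ratio_powr_le[of p t t0 "1 - \<theta>"] p t0 t1_pos \<theta>_half unfolding tL_def by auto
    hence "t1 * \<theta> \<le> t * (1 - (t / t0) powr p)"
      using t \<theta> t1_pos by (intro mult_mono) auto
    also have "\<dots> \<le> t * \<bar>1 - (t / t0) powr p\<bar>"
      using t t1_pos by (intro mult_left_mono) auto
    finally show "t1 * \<theta> \<le> t * \<bar>1 - (t / t0) powr (b - 1)\<bar>"
      unfolding p_def .
  qed (use t1_pos \<theta> in \<open>auto simp: t1_def\<close>)
  have window: "integrals_le (osc_kernel b 1 (- \<kappa>)) {tL..tR} (3 * \<theta> / (b - 1))"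
    unfolding tL_def tR_def p_def using osc_kernel_window_bound[OF _ t0 \<theta>(1) \<theta>_half] b by simp
  have right: "integrals_le (osc_kernel b 1 (- \<kappa>)) {tR..} (4 / (t0 * \<theta>))"
  proof (rule osc_kernel_after_turning_point[OF b t0 \<kappa>])
    fix t assume t: "t \<in> {tR..}"
    hence ratio_ge: "1 + \<theta> \<le> (t / t0) powr p"
      using ratio_powr_ge[of p t t0 "1 + \<theta>"] p t0 t0_tR \<theta> unfolding tR_def by auto
    hence "t0 * \<theta> \<le> t * ((t / t0) powr p - 1)"
      using t t0_tR \<theta> t0 by (intro mult_mono) auto
    also have "\<dots> = t * \<bar>1 - (t / t0) powr p\<bar>"
      using ratio_ge \<theta> by simp
    finally show "t0 * \<theta> \<le> t * \<bar>1 - (t / t0) powr (b - 1)\<bar>"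
      unfolding p_def .
  qed (use t1_tL tL_tR t0 \<theta> in \<open>auto simp: t1_def\<close>)
  have "integrals_le (osc_kernel b 1 (- \<kappa>)) {tL..} (3 * \<theta> / (b - 1) + 4 / (t0 * \<theta>))"
    by (rule integrals_le_join_atLeast[OF continuous_on_osc_kernel _ tL_tR window right])
      (use t1_pos t1_tL in auto)
  from integrals_le_join_atLeast[OF continuous_on_osc_kernel t1_pos t1_tL left this]
  show ?thesis
    by (simp add: add.assoc)
qed

text \<open>The constant left by the window width \<open>\<theta> = \<theta>0 r / sqrt t0\<close> chosen in the next proof,
  which balances \<open>\<theta>\<close> against \<open>1 / (t0 \<theta>)\<close>.\<close>

definition stationary_const :: "real \<Rightarrow> real" where
  "stationary_const b =
     (let \<theta>0 = (1 - 1 / b) / 2; r = ((1 / b) powr (1 / (b - 1))) powr (1/2)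
      in 4 / (\<theta>0 * r * r * r) + 3 * \<theta>0 * r / (b - 1) + 4 / (\<theta>0 * r))"

lemma stationary_const_pos: "b > 1 \<Longrightarrow> 0 < stationary_const b"
  unfolding stationary_const_def Let_def
  by (intro add_pos_pos divide_pos_pos mult_pos_pos) (auto simp: field_simps)

lemma osc_kernel_tail_stationary:
  fixes b t0 A \<kappa> :: real
  assumes b: "b > 1" and t0: "(1 / b) powr (1 / (b - 1)) \<le> t0" and A: "0 < A"
    and \<kappa>: "\<kappa> = 1 / (b * t0 powr (b - 1))"
  shows "integrals_le (osc_kernel b 1 (- \<kappa>)) {A..}
           (4 / (A * (1 - 1 / b)) + stationary_const b / t0 powr (1/2))"
proof -
  define \<beta> where "\<beta> = (1 / b) powr (1 / (b - 1))"
  define \<theta>0 where "\<theta>0 = (1 - 1 / b) / 2"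
  define r where "r = \<beta> powr (1/2)"
  define s where "s = t0 powr (1/2)"
  define \<theta> where "\<theta> = \<theta>0 * r / s"
  define t1 where "t1 = t0 * \<beta>"
  have \<beta>_pos: "0 < \<beta>"
    unfolding \<beta>_def using b by simp
  have t0_pos: "0 < t0"
    using \<beta>_pos t0 unfolding \<beta>_def by linarith
  have r_pos: "0 < r" and s_pos: "0 < s"
    unfolding r_def s_def using \<beta>_pos t0_pos by simp_all
  have rr: "r * r = \<beta>" and ss: "s * s = t0"
    unfolding r_def s_def using \<beta>_pos t0_pos by (simp_all flip: powr_add)
  have r_le_s: "r \<le> s"
    unfolding r_def s_def using t0 \<beta>_pos unfolding \<beta>_def by (intro powr_mono2) auto
  have \<theta>0_pos: "0 < \<theta>0"
    unfolding \<theta>0_def using b by (simp add: field_simps)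
  have \<theta>_pos: "0 < \<theta>"
    unfolding \<theta>_def using \<theta>0_pos r_pos s_pos by simp
  have "\<theta>0 * (r / s) \<le> \<theta>0 * 1"
    using r_le_s s_pos \<theta>0_pos by (intro mult_left_mono) auto
  hence \<theta>_le: "\<theta> \<le> (1 - 1 / b) / 2"
    unfolding \<theta>_def \<theta>0_def by simp
  have "4 / (t1 * \<theta>) + 3 * \<theta> / (b - 1) + 4 / (t0 * \<theta>)
      = (4 / (\<theta>0 * r * r * r) + 3 * \<theta>0 * r / (b - 1) + 4 / (\<theta>0 * r)) / s"
    unfolding t1_def \<theta>_def rr[symmetric] ss[symmetric]
    using s_pos r_pos \<theta>0_pos b by (simp add: field_simps)
  also have "\<dots> = stationary_const b / t0 powr (1/2)"
    unfolding stationary_const_def Let_def \<theta>0_def r_def \<beta>_def s_def ..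
  finally have after: "integrals_le (osc_kernel b 1 (- \<kappa>)) {t1..} (stationary_const b / t0 powr (1/2))"
    using osc_kernel_after_turning_point_window[OF b t0_pos \<kappa> \<theta>_pos \<theta>_le]
    unfolding t1_def \<beta>_def by simp
  have before: "integrals_le (osc_kernel b 1 (- \<kappa>)) {A..t1} (4 / (A * (1 - 1 / b)))"
    using osc_kernel_before_turning_point[OF b t0_pos \<kappa> A] unfolding t1_def \<beta>_def .
  show ?thesis
  proof (cases "A \<le> t1")
    case True
    show ?thesis
      by (rule integrals_le_join_atLeast[OF continuous_on_osc_kernel A True before after])
  next
    case False
    have "0 \<le> 4 / (A * (1 - 1 / b))"
      using A b by (simp add: field_simps)
    thus ?thesis
      using False by (intro integrals_le_mono[OF after]) auto
  qed
qed

lemma stationary_point_of_coefficient: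
  fixes b \<kappa> :: real
  assumes b: "b > 1" and \<kappa>: "0 < \<kappa>" "\<kappa> \<le> 1"
  defines "t0 \<equiv> (b * \<kappa>) powr (- (1 / (b - 1)))"
  shows "(1 / b) powr (1 / (b - 1)) \<le> t0" and "\<kappa> = 1 / (b * t0 powr (b - 1))"
    and "1 / t0 powr (1/2) \<le> b powr (1 / (2 * (b - 1))) * \<kappa> powr (1 / (2 * b))"
proof -
  have p: "0 < b - 1"
    using b by simp
  have "(1 / b) powr (1 / (b - 1)) = b powr (- (1 / (b - 1)))"
    by (simp add: powr_minus_divide powr_divide)
  also have "\<dots> \<le> t0"
    unfolding t0_def using b \<kappa> p by (intro powr_mono2') (auto simp: mult_le_cancel_left1)
  finally show "(1 / b) powr (1 / (b - 1)) \<le> t0" .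
  have "t0 powr (b - 1) = (b * \<kappa>) powr (- 1)"
    unfolding t0_def using p by (simp add: powr_powr)
  thus "\<kappa> = 1 / (b * t0 powr (b - 1))"
    using b \<kappa> by (simp add: powr_neg_one)
  have "t0 powr (1/2) = (b * \<kappa>) powr (- (1 / (2 * (b - 1))))"
    unfolding t0_def by (simp add: powr_powr mult.commute)
  hence "1 / t0 powr (1/2) = (b * \<kappa>) powr (1 / (2 * (b - 1)))"
    by (simp add: powr_minus_divide)
  also have "\<dots> = b powr (1 / (2 * (b - 1))) * \<kappa> powr (1 / (2 * (b - 1)))"
    using b \<kappa> by (simp add: powr_mult)
  also have "\<dots> \<le> b powr (1 / (2 * (b - 1))) * \<kappa> powr (1 / (2 * b))"
    using \<kappa> b by (intro mult_left_mono powr_mono') (auto simp: field_simps)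
  finally show "1 / t0 powr (1/2) \<le> b powr (1 / (2 * (b - 1))) * \<kappa> powr (1 / (2 * b))" .
qed

lemma osc_kernel_tail_opposite_sign:
  fixes b \<kappa> A :: real
  assumes b: "b > 1" and \<kappa>: "0 < \<kappa>" "\<kappa> \<le> 1" and A: "0 < A"
  shows "integrals_le (osc_kernel b 1 (- \<kappa>)) {A..}
           (4 / (A * (1 - 1 / b)) + stationary_const b * b powr (1 / (2 * (b - 1))) * \<kappa> powr (1 / (2 * b)))"
proof -
  note t0 = stationary_point_of_coefficient[OF b \<kappa>]
  from mult_left_mono[OF t0(3) less_imp_le[OF stationary_const_pos[OF b]]]
  have "stationary_const b / ((b * \<kappa>) powr (- (1 / (b - 1)))) powr (1/2)
      \<le> stationary_const b * b powr (1 / (2 * (b - 1))) * \<kappa> powr (1 / (2 * b))"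
    by (simp add: mult.assoc)
  thus ?thesis
    by (intro integrals_le_mono[OF osc_kernel_tail_stationary[OF b t0(1) A t0(2)]]) auto
qed

section \<open>Estimates for normalised coefficients\<close>

lemma osc_kernel_tail_unit:
  fixes b \<delta> A :: real
  assumes b: "b > 1" and \<delta>: "\<bar>\<delta>\<bar> \<le> 1" and A: "0 < A"
  shows "integrals_le (osc_kernel b 1 \<delta>) {A..}
           (4 / (A * (1 - 1 / b)) + stationary_const b * b powr (1 / (2 * (b - 1))) * \<bar>\<delta>\<bar> powr (1 / (2 * b)))"
proof (cases "0 \<le> \<delta>")
  case True
  have "integrals_le (osc_kernel b 1 \<delta>) {A..} (4 / A)"
    using osc_kernel_tail_same_sign[OF b _ _ A, of 1 \<delta>] True by simp
  moreover have "4 / A \<le> 4 / (A * (1 - 1 / b))"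
    using A b by (intro divide_left_mono mult_pos_pos) (auto simp: field_simps)
  moreover have "0 \<le> stationary_const b * b powr (1 / (2 * (b - 1))) * \<bar>\<delta>\<bar> powr (1 / (2 * b))"
    using stationary_const_pos[OF b] by simp
  ultimately show ?thesis
    by (elim integrals_le_mono) auto
next
  case False
  thus ?thesis
    using osc_kernel_tail_opposite_sign[OF b _ _ A, of "- \<delta>"] \<delta> by simp
qed

definition drop_power_const :: "real \<Rightarrow> real" where
  "drop_power_const b = 5 + 4 / (1 - 1 / b) + stationary_const b * b powr (1 / (2 * (b - 1)))"

lemma drop_power_const_pos: "b > 1 \<Longrightarrow> 0 < drop_power_const b"
  unfolding drop_power_const_def using stationary_const_pos[of b]
  by (intro add_pos_nonneg) (auto simp: field_simps)

text \<open>Cut \<open>(0, \<infinity>)\<close> at \<open>A = |\<delta>|^(-1/(2b))\<close>: below \<open>A\<close> the two kernels differ pointwise by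
  at most \<open>|\<delta>| A^(b-1)\<close>, above \<open>A\<close> each kernel is estimated on its own.\<close>

lemma osc_kernel_drop_power_unit_small:
  fixes b \<delta> :: real
  assumes b: "b > 1" and \<delta>: "\<bar>\<delta>\<bar> \<le> 1"
  shows "integrals_le (\<lambda>t. osc_kernel b 1 \<delta> t - osc_kernel b 1 0 t) {0<..}
           (drop_power_const b * \<bar>\<delta>\<bar> powr (1 / (2 * b)))"
proof (cases "\<delta> = 0")
  case True
  thus ?thesis
    using drop_power_const_pos[OF b] integrals_le_zero[of "{0<..}"] by simp
next
  case False
  define \<kappa> where "\<kappa> = \<bar>\<delta>\<bar>"
  have \<kappa>: "0 < \<kappa>" "\<kappa> \<le> 1"
    using False \<delta> unfolding \<kappa>_def by auto
  define A where "A = \<kappa> powr (- (1 / (2 * b)))"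
  define e where "e = \<kappa> powr (1 / (2 * b))"
  have A_pos: "0 < A" and e_pos: "0 < e"
    unfolding A_def e_def using \<kappa> by simp_all
  have A_inv: "1 / A = e"
    unfolding A_def e_def using e_pos by (simp add: powr_minus_divide)
  have "A powr (b - 1) * A = \<kappa> powr (- (1/2))"
    using powr_eq_mult_powr_minus_one[OF A_pos, of b] b
    unfolding A_def by (simp add: powr_powr mult.commute)
  hence "\<kappa> * A powr (b - 1) * A = \<kappa> powr (1/2)"
    using \<kappa> by (simp add: mult.assoc powr_mult_base)
  also have "\<dots> \<le> e"
    unfolding e_def using \<kappa> b by (intro powr_mono') (auto simp: field_simps)
  finally have near: "integrals_le (\<lambda>t. osc_kernel b 1 \<delta> t - osc_kernel b 1 0 t) {0<..A} e"
    using osc_kernel_diff_near_zero[OF b A_pos, of 1 \<delta> 1 0] unfolding \<kappa>_def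
    by (elim integrals_le_mono) (auto simp: mult.assoc)
  have far0: "integrals_le (osc_kernel b 1 0) {A..} (4 * e)"
    using osc_kernel_tail_same_sign[OF b _ _ A_pos, of 1 0] A_inv by (simp add: divide_inverse mult.commute)
  have "4 / (A * (1 - 1 / b)) = 4 / (1 - 1 / b) * e"
    using A_inv[symmetric] by simp
  hence far1: "integrals_le (osc_kernel b 1 \<delta>) {A..}
      (4 / (1 - 1 / b) * e + stationary_const b * b powr (1 / (2 * (b - 1))) * e)"
    using osc_kernel_tail_unit[OF b \<delta> A_pos] unfolding e_def \<kappa>_def by simp
  have "integrals_le (\<lambda>t. osc_kernel b 1 \<delta> t - osc_kernel b 1 0 t) {A..}
      (4 / (1 - 1 / b) * e + stationary_const b * b powr (1 / (2 * (b - 1))) * e + 4 * e)"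
    by (rule integrals_le_diff[OF continuous_on_osc_kernel continuous_on_osc_kernel _ far1 far0])
      (use A_pos in auto)
  from integrals_le_join_greaterThan[OF continuous_on_osc_kernel_diff A_pos near this]
  show ?thesis
    unfolding drop_power_const_def e_def \<kappa>_def by (simp add: algebra_simps)
qed

definition perturb_linear_const :: "real \<Rightarrow> real" where
  "perturb_linear_const b = 1 + 8 / (b - 1)"

lemma perturb_linear_const_pos: "b > 1 \<Longrightarrow> 0 < perturb_linear_const b"
  unfolding perturb_linear_const_def by (simp add: add_pos_pos)

lemma osc_kernel_perturb_linear_small:
  fixes b \<eta> :: real
  assumes b: "b > 1" and \<eta>: "\<bar>\<eta>\<bar> \<le> 1"
  shows "integrals_le (\<lambda>t. osc_kernel b \<eta> 1 t - osc_kernel b 0 1 t) {0<..}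
           (perturb_linear_const b * \<bar>\<eta>\<bar> powr (1 / 2))"
proof (cases "\<eta> = 0")
  case True
  thus ?thesis
    using perturb_linear_const_pos[OF b] integrals_le_zero[of "{0<..}"] by simp
next
  case False
  define \<kappa> where "\<kappa> = \<bar>\<eta>\<bar>"
  have \<kappa>: "0 < \<kappa>" "\<kappa> \<le> 1"
    using False \<eta> unfolding \<kappa>_def by auto
  define A where "A = \<kappa> powr (- (1 / 2))"
  define e where "e = \<kappa> powr (1 / 2)"
  have A_pos: "0 < A" and e_pos: "0 < e"
    unfolding A_def e_def using \<kappa> by simp_all
  have A_inv: "A = 1 / e"
    unfolding A_def e_def by (rule powr_minus_divide)
  have "e \<le> 1"
    unfolding e_def using \<kappa> powr_mono2[of "1/2" \<kappa> 1] by simp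
  hence A_ge: "1 \<le> A"
    unfolding A_inv using e_pos by (simp add: le_divide_eq)
  have "\<kappa> * A = e"
    unfolding A_def e_def using \<kappa> by (simp add: powr_mult_base)
  hence near: "integrals_le (\<lambda>t. osc_kernel b \<eta> 1 t - osc_kernel b 0 1 t) {0<..A} e"
    using osc_kernel_diff_near_zero[OF b A_pos, of \<eta> 1 0 1] unfolding \<kappa>_def by simp
  have "4 / ((b - 1) * A powr b) \<le> 4 / ((b - 1) * A)"
    using A_ge b powr_mono[of 1 b A] by (intro divide_left_mono mult_left_mono mult_pos_pos) auto
  also have "\<dots> = 4 / (b - 1) * e"
    unfolding A_inv using e_pos b by (simp add: field_simps)
  finally have tail_le: "4 / ((b - 1) * \<bar>1::real\<bar> * A powr b) \<le> 4 / (b - 1) * e"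
    by simp
  have A_dominant: "\<bar>\<alpha>\<bar> \<le> \<bar>1\<bar> * A powr (b - 1)" if "\<bar>\<alpha>\<bar> \<le> 1" for \<alpha> :: real
    using that A_ge b ge_one_powr_ge_zero[of A "b - 1"] by simp
  have far: "integrals_le (osc_kernel b \<alpha> 1) {A..} (4 / (b - 1) * e)" if "\<bar>\<alpha>\<bar> \<le> 1" for \<alpha> :: real
    by (rule integrals_le_mono[OF osc_kernel_tail_power_dominant[OF b _ A_pos A_dominant[OF that]] _ tail_le])
      simp_all
  have "integrals_le (\<lambda>t. osc_kernel b \<eta> 1 t - osc_kernel b 0 1 t) {A..} (4 / (b - 1) * e + 4 / (b - 1) * e)"
    by (rule integrals_le_diff[OF continuous_on_osc_kernel continuous_on_osc_kernel _ far far])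
      (use A_pos \<eta> in auto)
  from integrals_le_join_greaterThan[OF continuous_on_osc_kernel_diff A_pos near this]
  show ?thesis
    unfolding perturb_linear_const_def e_def \<kappa>_def by (simp add: algebra_simps)
qed

lemma osc_kernel_tail_extend:
  assumes "0 < s" "s \<le> K" "integrals_le (osc_kernel b \<alpha> \<gamma>) {K..} B"
  shows "integrals_le (osc_kernel b \<alpha> \<gamma>) {s..} (ln K - ln s + B)"
  by (rule integrals_le_join_atLeast[OF continuous_on_osc_kernel assms(1,2)
        osc_kernel_log_bound[OF assms(1,2)] assms(3)])

definition linear_vs_power_const :: "real \<Rightarrow> real" where
  "linear_vs_power_const b = 6 + 4 / (b - 1)"

lemma linear_vs_power_const_pos: "b > 1 \<Longrightarrow> 0 < linear_vs_power_const b"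
  unfolding linear_vs_power_const_def by (simp add: add_pos_nonneg)

text \<open>The linear phase oscillates only beyond \<open>t = 1\<close>, the power phase only beyond
  \<open>K = |\<delta>|^(-1/b)\<close>; between the two scales the trivial bound \<open>1/t\<close> costs \<open>|ln K|\<close>.\<close>

lemma osc_kernel_linear_vs_power:
  fixes b \<delta> :: real
  assumes b: "b > 1" and \<delta>: "\<delta> \<noteq> 0"
  shows "integrals_le (\<lambda>t. osc_kernel b 1 0 t - osc_kernel b 0 \<delta> t) {0<..}
           (linear_vs_power_const b + \<bar>ln \<bar>\<delta>\<bar>\<bar> / b)"
proof -
  define K where "K = \<bar>\<delta>\<bar> powr (- (1 / b))"
  define s where "s = min 1 K"
  have K_pos: "0 < K"
    unfolding K_def using \<delta> by simp
  have \<delta>_K: "\<bar>\<delta>\<bar> * K powr b = 1"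
    unfolding K_def using b \<delta> by (simp add: powr_powr powr_neg_one)
  have ln_K: "ln K = - ln \<bar>\<delta>\<bar> / b"
    unfolding K_def using \<delta> by (simp add: ln_powr)
  have s: "0 < s" "s \<le> 1" "s \<le> K"
    unfolding s_def using K_pos by auto
  have linear_tail: "integrals_le (osc_kernel b 1 0) {s..} (ln 1 - ln s + 4)"
    by (rule osc_kernel_tail_extend[OF s(1,2)])
      (use osc_kernel_tail_same_sign[OF b _ _ zero_less_one, of 1 0] in simp)
  have "integrals_le (osc_kernel b 0 \<delta>) {K..} (4 / ((b - 1) * \<bar>\<delta>\<bar> * K powr b))"
    by (rule osc_kernel_tail_power_dominant[OF b \<delta> K_pos]) simp
  hence power_tail: "integrals_le (osc_kernel b 0 \<delta>) {s..} (ln K - ln s + 4 / (b - 1))"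
    using \<delta>_K by (intro osc_kernel_tail_extend[OF s(1,3)]) (simp add: mult.assoc)
  have far: "integrals_le (\<lambda>t. osc_kernel b 1 0 t - osc_kernel b 0 \<delta> t) {s..}
      ((ln 1 - ln s + 4) + (ln K - ln s + 4 / (b - 1)))"
    by (rule integrals_le_diff[OF continuous_on_osc_kernel continuous_on_osc_kernel _
          linear_tail power_tail])
      (use s in auto)
  have "s + \<bar>\<delta>\<bar> * s powr b \<le> 1 + \<bar>\<delta>\<bar> * K powr b"
    using s b by (intro add_mono mult_left_mono powr_mono2) auto
  hence "(\<bar>1 - 0\<bar> + \<bar>0 - \<delta>\<bar> * s powr (b - 1)) * s \<le> 2"
    using \<delta>_K s powr_eq_mult_powr_minus_one[OF s(1), of b] by (simp add: algebra_simps)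
  hence near: "integrals_le (\<lambda>t. osc_kernel b 1 0 t - osc_kernel b 0 \<delta> t) {0<..s} 2"
    using osc_kernel_diff_near_zero[OF b s(1), of 1 0 0 \<delta>] by (elim integrals_le_mono) auto
  have "integrals_le (\<lambda>t. osc_kernel b 1 0 t - osc_kernel b 0 \<delta> t) {0<..}
      (2 + ((ln 1 - ln s + 4) + (ln K - ln s + 4 / (b - 1))))"
    by (rule integrals_le_join_greaterThan[OF continuous_on_osc_kernel_diff s(1) near far])
  moreover have "2 + ((ln 1 - ln s + 4) + (ln K - ln s + 4 / (b - 1)))
      = linear_vs_power_const b + \<bar>ln \<bar>\<delta>\<bar>\<bar> / b"
  proof -
    have "ln K - ln s - ln s = \<bar>ln K\<bar>"
      unfolding s_def using K_pos by (cases "1 \<le> K") (auto simp: min_def)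
    moreover have "\<bar>ln K\<bar> = \<bar>ln \<bar>\<delta>\<bar>\<bar> / b"
      unfolding ln_K using b by simp
    ultimately show ?thesis
      unfolding linear_vs_power_const_def by simp
  qed
  ultimately show ?thesis
    by simp
qed

text \<open>Rescaling \<open>t \<mapsto> |\<delta>|^(1/b) t\<close> turns the coefficients \<open>(1, \<delta>)\<close> into
  \<open>(|\<delta>|^(-1/b), \<plusminus>1)\<close>.\<close>

lemma osc_kernel_drop_linear_unit_large:
  fixes b \<delta> :: real
  assumes b: "b > 1" and \<delta>: "1 \<le> \<bar>\<delta>\<bar>"
  shows "integrals_le (\<lambda>t. osc_kernel b 1 \<delta> t - osc_kernel b 0 \<delta> t) {0<..}
           (perturb_linear_const b * \<bar>\<delta>\<bar> powr (- (1 / (2 * b))))"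
proof (rule integrals_le_osc_kernel_diff_rescale)
  define c where "c = \<bar>\<delta>\<bar> powr (1 / b)"
  show c_pos: "0 < c"
    unfolding c_def using \<delta> by simp
  have "1 \<le> c"
    unfolding c_def using \<delta> b by (intro ge_one_powr_ge_zero) auto
  hence c_inv: "\<bar>1 / c\<bar> \<le> 1" "\<bar>- (1 / c)\<bar> \<le> 1"
    by simp_all
  have c_pow: "c powr b = \<bar>\<delta>\<bar>"
    unfolding c_def using b \<delta> by (simp add: powr_powr)
  have "\<bar>1 / c\<bar> powr (1 / 2) = (\<bar>\<delta>\<bar> powr (1 / b)) powr (- (1/2))"
    using c_pos unfolding c_def by (simp add: powr_minus_divide powr_divide)
  also have "\<dots> = \<bar>\<delta>\<bar> powr (- (1 / (2 * b)))"
    by (simp add: powr_powr mult.commute)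
  finally have bound_eq: "perturb_linear_const b * \<bar>1 / c\<bar> powr (1 / 2)
      = perturb_linear_const b * \<bar>\<delta>\<bar> powr (- (1 / (2 * b)))"
    by simp
  show "integrals_le (\<lambda>t. osc_kernel b (1 / c) (\<delta> / c powr b) t - osc_kernel b (0 / c) (\<delta> / c powr b) t)
      {0<..} (perturb_linear_const b * \<bar>\<delta>\<bar> powr (- (1 / (2 * b))))"
  proof (cases "\<delta> > 0")
    case True
    hence eq: "\<delta> / c powr b = 1"
      unfolding c_pow by simp
    show ?thesis
      unfolding eq div_0 bound_eq[symmetric] by (rule osc_kernel_perturb_linear_small[OF b c_inv(1)])
  next
    case False
    hence eq: "\<delta> / c powr b = - 1"
      unfolding c_pow using \<delta> by simp
    show ?thesis
      unfolding eq div_0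
    proof (rule integrals_le_osc_kernel_diff_cnj)
      show "integrals_le (\<lambda>t. osc_kernel b (- (1 / c)) (- (- 1)) t - osc_kernel b (- 0) (- (- 1)) t)
          {0<..} (perturb_linear_const b * \<bar>\<delta>\<bar> powr (- (1 / (2 * b))))"
        using osc_kernel_perturb_linear_small[OF b c_inv(2)]
        unfolding abs_minus_cancel bound_eq by simp
    qed
  qed
qed

lemma ln_div_le_powr:
  fixes b \<kappa> :: real
  assumes b: "b > 0" and \<kappa>: "0 < \<kappa>"
  shows "ln \<kappa> / b \<le> 2 * \<kappa> powr (1 / (2 * b))"
proof -
  define e where "e = \<kappa> powr (1 / (2 * b))"
  have "ln e = ln \<kappa> / (2 * b)"
    unfolding e_def using \<kappa> by (simp add: ln_powr)
  moreover have "ln e \<le> e - 1"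
    unfolding e_def using \<kappa> by (intro ln_le_minus_one) simp
  ultimately have "ln \<kappa> / (2 * b) \<le> e"
    by linarith
  thus ?thesis
    unfolding e_def using b by (simp add: field_simps)
qed

definition kernel_const :: "real \<Rightarrow> real" where
  "kernel_const b = drop_power_const b + perturb_linear_const b + linear_vs_power_const b + 2"

lemma kernel_const_ge:
  assumes "b > 1"
  shows "drop_power_const b \<le> kernel_const b" "perturb_linear_const b \<le> kernel_const b" "1 \<le> kernel_const b"
  using drop_power_const_pos[OF assms] perturb_linear_const_pos[OF assms] linear_vs_power_const_pos[OF assms]
  unfolding kernel_const_def by auto

text \<open>For \<open>|\<delta>| > 1\<close> compare both kernels with \<open>osc_kernel b 0 \<delta>\<close>; the logarithmic loss
  \<open>|ln |\<delta>|| / b\<close> is at most \<open>2 |\<delta>|^(1/(2b))\<close>.\<close>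

lemma osc_kernel_drop_power_unit:
  fixes b \<delta> :: real
  assumes b: "b > 1"
  shows "integrals_le (\<lambda>t. osc_kernel b 1 \<delta> t - osc_kernel b 1 0 t) {0<..}
           (kernel_const b * \<bar>\<delta>\<bar> powr (1 / (2 * b)))"
proof (cases "\<bar>\<delta>\<bar> \<le> 1")
  case True
  have "drop_power_const b * \<bar>\<delta>\<bar> powr (1 / (2 * b)) \<le> kernel_const b * \<bar>\<delta>\<bar> powr (1 / (2 * b))"
    using kernel_const_ge[OF b] by (intro mult_right_mono) auto
  thus ?thesis
    using osc_kernel_drop_power_unit_small[OF b True] by (elim integrals_le_mono) auto
next
  case False
  define \<kappa> where "\<kappa> = \<bar>\<delta>\<bar>"
  have \<kappa>: "1 < \<kappa>" "0 < \<kappa>" "\<delta> \<noteq> 0"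
    using False unfolding \<kappa>_def by auto
  define e where "e = \<kappa> powr (1 / (2 * b))"
  have e_ge: "1 \<le> e"
    unfolding e_def using \<kappa> b by (intro ge_one_powr_ge_zero) auto
  have "\<kappa> powr (- (1 / (2 * b))) \<le> 1"
    using e_ge unfolding e_def powr_minus_divide by (simp add: divide_le_eq_1)
  hence "perturb_linear_const b * \<kappa> powr (- (1 / (2 * b))) \<le> perturb_linear_const b * e"
    using perturb_linear_const_pos[OF b] e_ge by (intro mult_left_mono) auto
  moreover have "linear_vs_power_const b \<le> linear_vs_power_const b * e"
    using linear_vs_power_const_pos[OF b] e_ge by simp
  moreover have "\<bar>ln \<kappa>\<bar> / b \<le> 2 * e"
    using ln_div_le_powr[of b \<kappa>] b \<kappa> unfolding e_def by simp
  ultimately have "perturb_linear_const b * \<kappa> powr (- (1 / (2 * b))) + (linear_vs_power_const b + \<bar>ln \<kappa>\<bar> / b)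
      \<le> (perturb_linear_const b + linear_vs_power_const b + 2) * e"
    unfolding distrib_right by linarith
  also have "\<dots> \<le> kernel_const b * e"
    unfolding kernel_const_def using drop_power_const_pos[OF b] e_ge by (intro mult_right_mono) auto
  finally have bound_le: "perturb_linear_const b * \<kappa> powr (- (1 / (2 * b)))
      + (linear_vs_power_const b + \<bar>ln \<kappa>\<bar> / b) \<le> kernel_const b * e" .
  have "integrals_le (\<lambda>t. (osc_kernel b 1 \<delta> t - osc_kernel b 0 \<delta> t) - (osc_kernel b 1 0 t - osc_kernel b 0 \<delta> t))
      {0<..} (perturb_linear_const b * \<kappa> powr (- (1 / (2 * b))) + (linear_vs_power_const b + \<bar>ln \<kappa>\<bar> / b))"
    unfolding \<kappa>_def
    by (rule integrals_le_diff[OF continuous_on_osc_kernel_diff continuous_on_osc_kernel_diff _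
          osc_kernel_drop_linear_unit_large[OF b] osc_kernel_linear_vs_power[OF b \<kappa>(3)]])
      (use \<kappa> \<kappa>_def in auto)
  hence "integrals_le (\<lambda>t. osc_kernel b 1 \<delta> t - osc_kernel b 1 0 t) {0<..}
      (perturb_linear_const b * \<kappa> powr (- (1 / (2 * b))) + (linear_vs_power_const b + \<bar>ln \<kappa>\<bar> / b))"
    by (rule integrals_le_cong[rotated 2]) auto
  thus ?thesis
    using bound_le unfolding e_def \<kappa>_def by (elim integrals_le_mono) auto
qed

text \<open>For \<open>|\<delta>| < 1\<close> compare both kernels with \<open>osc_kernel b 1 0\<close>.\<close>

lemma osc_kernel_drop_linear_unit:
  fixes b \<delta> :: real
  assumes b: "b > 1" and \<delta>: "\<delta> \<noteq> 0"
  shows "integrals_le (\<lambda>t. osc_kernel b 1 \<delta> t - osc_kernel b 0 \<delta> t) {0<..}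
           (kernel_const b * \<bar>\<delta>\<bar> powr (- (1 / (2 * b))))"
proof (cases "1 \<le> \<bar>\<delta>\<bar>")
  case True
  have "perturb_linear_const b * \<bar>\<delta>\<bar> powr (- (1 / (2 * b))) \<le> kernel_const b * \<bar>\<delta>\<bar> powr (- (1 / (2 * b)))"
    using kernel_const_ge[OF b] by (intro mult_right_mono) auto
  thus ?thesis
    using osc_kernel_drop_linear_unit_large[OF b True] by (elim integrals_le_mono) auto
next
  case False
  define \<kappa> where "\<kappa> = \<bar>\<delta>\<bar>"
  have \<kappa>: "\<kappa> < 1" "0 < \<kappa>"
    using False \<delta> unfolding \<kappa>_def by auto
  define E where "E = \<kappa> powr (- (1 / (2 * b)))"
  define e where "e = \<kappa> powr (1 / (2 * b))"
  have e_pos: "0 < e"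
    unfolding e_def using \<kappa> by simp
  have e_le: "e \<le> 1"
    unfolding e_def using \<kappa> b powr_mono2[of "1 / (2 * b)" \<kappa> 1] by simp
  have E_eq: "E = 1 / e"
    unfolding E_def e_def by (rule powr_minus_divide)
  have E_ge: "1 \<le> E"
    unfolding E_eq using e_le e_pos by (simp add: le_divide_eq)
  have "\<bar>ln \<kappa>\<bar> / b = ln (1 / \<kappa>) / b"
    using \<kappa> by (simp add: ln_div)
  also have "\<dots> \<le> 2 * E"
    using ln_div_le_powr[of b "1 / \<kappa>"] b \<kappa> unfolding E_def by (simp add: powr_divide powr_minus_divide)
  finally have "\<bar>ln \<kappa>\<bar> / b \<le> 2 * E" .
  moreover have "drop_power_const b * e \<le> drop_power_const b * E"
    using drop_power_const_pos[OF b] e_le E_ge by (intro mult_left_mono) auto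
  moreover have "linear_vs_power_const b \<le> linear_vs_power_const b * E"
    using linear_vs_power_const_pos[OF b] E_ge by simp
  ultimately have "drop_power_const b * e + (linear_vs_power_const b + \<bar>ln \<kappa>\<bar> / b)
      \<le> (drop_power_const b + linear_vs_power_const b + 2) * E"
    unfolding distrib_right by linarith
  also have "\<dots> \<le> kernel_const b * E"
    unfolding kernel_const_def using perturb_linear_const_pos[OF b] E_ge by (intro mult_right_mono) auto
  finally have bound_le: "drop_power_const b * e + (linear_vs_power_const b + \<bar>ln \<kappa>\<bar> / b)
      \<le> kernel_const b * E" .
  have "integrals_le (\<lambda>t. (osc_kernel b 1 \<delta> t - osc_kernel b 1 0 t) + (osc_kernel b 1 0 t - osc_kernel b 0 \<delta> t))
      {0<..} (drop_power_const b * e + (linear_vs_power_const b + \<bar>ln \<kappa>\<bar> / b))"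
    unfolding \<kappa>_def e_def
    by (rule integrals_le_add[OF continuous_on_osc_kernel_diff continuous_on_osc_kernel_diff _
          osc_kernel_drop_power_unit_small[OF b] osc_kernel_linear_vs_power[OF b \<delta>]])
      (use \<kappa> \<kappa>_def in auto)
  hence "integrals_le (\<lambda>t. osc_kernel b 1 \<delta> t - osc_kernel b 0 \<delta> t) {0<..}
      (drop_power_const b * e + (linear_vs_power_const b + \<bar>ln \<kappa>\<bar> / b))"
    by (rule integrals_le_cong[rotated 2]) auto
  thus ?thesis
    using bound_le unfolding E_def \<kappa>_def by (elim integrals_le_mono) auto
qed

lemma osc_kernel_drop_power:
  fixes b \<alpha> \<gamma> :: real
  assumes b: "b > 1" and \<alpha>: "\<alpha> \<noteq> 0"
  shows "integrals_le (\<lambda>t. osc_kernel b \<alpha> \<gamma> t - osc_kernel b \<alpha> 0 t) {0<..}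
           (kernel_const b * (\<bar>\<gamma>\<bar> / \<bar>\<alpha>\<bar> powr b) powr (1 / (2 * b)))"
proof -
  have pos: "integrals_le (\<lambda>t. osc_kernel b a g t - osc_kernel b a 0 t) {0<..}
      (kernel_const b * (\<bar>g\<bar> / \<bar>a\<bar> powr b) powr (1 / (2 * b)))" if a: "a > 0" for a g :: real
  proof (rule integrals_le_osc_kernel_diff_rescale[OF a])
    have "\<bar>g / a powr b\<bar> = \<bar>g\<bar> / \<bar>a\<bar> powr b"
      using a by simp
    thus "integrals_le (\<lambda>t. osc_kernel b (a / a) (g / a powr b) t - osc_kernel b (a / a) (0 / a powr b) t)
        {0<..} (kernel_const b * (\<bar>g\<bar> / \<bar>a\<bar> powr b) powr (1 / (2 * b)))"
      using osc_kernel_drop_power_unit[OF b, of "g / a powr b"] a by simp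
  qed
  show ?thesis
  proof (cases "\<alpha> > 0")
    case True
    thus ?thesis
      by (rule pos)
  next
    case False
    hence "- \<alpha> > 0"
      using \<alpha> by simp
    show ?thesis
      by (rule integrals_le_osc_kernel_diff_cnj) (use pos[OF \<open>- \<alpha> > 0\<close>, of "- \<gamma>"] in simp)
  qed
qed

lemma osc_kernel_drop_linear:
  fixes b \<alpha> \<gamma> :: real
  assumes b: "b > 1" and \<gamma>: "\<gamma> \<noteq> 0"
  shows "integrals_le (\<lambda>t. osc_kernel b \<alpha> \<gamma> t - osc_kernel b 0 \<gamma> t) {0<..}
           (kernel_const b * (\<bar>\<alpha>\<bar> powr b / \<bar>\<gamma>\<bar>) powr (1 / (2 * b)))"
proof -
  have pos: "integrals_le (\<lambda>t. osc_kernel b a g t - osc_kernel b 0 g t) {0<..}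
      (kernel_const b * (\<bar>a\<bar> powr b / \<bar>g\<bar>) powr (1 / (2 * b)))" if a: "a > 0" and g: "g \<noteq> 0" for a g :: real
  proof (rule integrals_le_osc_kernel_diff_rescale[OF a])
    have "\<bar>g / a powr b\<bar> powr (- (1 / (2 * b))) = (1 / \<bar>g / a powr b\<bar>) powr (1 / (2 * b))"
      by (simp add: powr_minus_divide powr_divide)
    also have "1 / \<bar>g / a powr b\<bar> = \<bar>a\<bar> powr b / \<bar>g\<bar>"
      using a by simp
    finally have "\<bar>g / a powr b\<bar> powr (- (1 / (2 * b))) = (\<bar>a\<bar> powr b / \<bar>g\<bar>) powr (1 / (2 * b))" .
    moreover have "g / a powr b \<noteq> 0"
      using a g by simp
    ultimately show "integrals_le (\<lambda>t. osc_kernel b (a / a) (g / a powr b) t - osc_kernel b (0 / a) (g / a powr b) t)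
        {0<..} (kernel_const b * (\<bar>a\<bar> powr b / \<bar>g\<bar>) powr (1 / (2 * b)))"
      using osc_kernel_drop_linear_unit[OF b, of "g / a powr b"] a by simp
  qed
  consider "\<alpha> = 0" | "\<alpha> > 0" | "\<alpha> < 0"
    by linarith
  thus ?thesis
  proof cases
    case 1
    thus ?thesis
      using kernel_const_ge[OF b] integrals_le_zero[of "{0<..}"] by simp
  next
    case 2
    thus ?thesis
      by (rule pos[OF _ \<gamma>])
  next
    case 3
    hence "- \<alpha> > 0" "- \<gamma> \<noteq> 0"
      using \<gamma> by simp_all
    show ?thesis
      by (rule integrals_le_osc_kernel_diff_cnj) (use pos[OF \<open>- \<alpha> > 0\<close> \<open>- \<gamma> \<noteq> 0\<close>] in simp)
  qed
qed

section \<open>Improper integrals over \<open>(0, \<infinity>)\<close>\<close>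

abbreviation trunc_filter :: "(real \<times> real) filter" where
  "trunc_filter \<equiv> at_right 0 \<times>\<^sub>F at_top"

definition trunc_integral :: "(real \<Rightarrow> complex) \<Rightarrow> real \<times> real \<Rightarrow> complex" where
  "trunc_integral f = (\<lambda>(eps, R). integral {eps..R} f)"

definition integrals_vanish_at_0 :: "(real \<Rightarrow> complex) \<Rightarrow> bool" where
  "integrals_vanish_at_0 f \<longleftrightarrow> (\<forall>e>0. \<exists>a>0. integrals_le f {0<..a} e)"

definition integrals_vanish_at_top :: "(real \<Rightarrow> complex) \<Rightarrow> bool" where
  "integrals_vanish_at_top f \<longleftrightarrow> (\<forall>e>0. \<exists>A>0. integrals_le f {A..} e)"

lemma trunc_filter_ne_bot: "trunc_filter \<noteq> bot"
  by (simp add: prod_filter_eq_bot trivial_limit_at_right_real)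

lemma eventually_trunc_filter:
  fixes a q :: real
  assumes "0 < a"
  shows "eventually (\<lambda>x. 0 < fst x \<and> fst x < a \<and> q < snd x) trunc_filter"
proof -
  have "eventually (\<lambda>x. fst x \<in> {0<..<a} \<and> q < snd x) trunc_filter"
    by (rule eventually_prodI[OF eventually_at_right_real[OF assms] eventually_gt_at_top])
  thus ?thesis
    by (rule eventually_mono) auto
qed

lemma eventually_trunc_filter_le: "eventually (\<lambda>x. 0 < fst x \<and> fst x \<le> snd x) trunc_filter"
  using eventually_trunc_filter[of 1 1] by (rule eventually_mono) auto

lemma integral_split3:
  fixes f :: "real \<Rightarrow> complex"
  assumes cont: "continuous_on {0<..} f" and "0 < e" "e \<le> a" "a \<le> q" "q \<le> R"
  shows "integral {e..R} f = integral {e..a} f + integral {a..q} f + integral {q..R} f"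
proof -
  have "integral {e..R} f = integral {e..a} f + integral {a..R} f"
    using assms by (intro Henstock_Kurzweil_Integration.integral_combine[symmetric]
        integrable_on_pos_interval[OF cont]) auto
  also have "integral {a..R} f = integral {a..q} f + integral {q..R} f"
    using assms by (intro Henstock_Kurzweil_Integration.integral_combine[symmetric]
        integrable_on_pos_interval[OF cont]) auto
  finally show ?thesis
    by (simp add: add.assoc)
qed

text \<open>Cauchy criterion: for \<open>eps, eps' < a\<close> and \<open>R, R' > A\<close> the integrals over \<open>[eps, R]\<close> and
  \<open>[eps', R']\<close> differ only by integrals over subintervals of \<open>(0, a]\<close> and \<open>[A, \<infinity>)\<close>.\<close>

lemma trunc_integral_converges:
  fixes f :: "real \<Rightarrow> complex"
  assumes cont: "continuous_on {0<..} f"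
    and at_0: "integrals_vanish_at_0 f" and at_top: "integrals_vanish_at_top f"
  shows "\<exists>L. (trunc_integral f \<longlongrightarrow> L) trunc_filter"
proof -
  have cauchy: "cauchy_filter (filtermap (trunc_integral f) trunc_filter)"
    unfolding cauchy_filter_metric_filtermap
  proof (intro allI impI)
    fix e :: real assume e: "e > 0"
    obtain a where a: "a > 0" "integrals_le f {0<..a} (e/5)"
      using at_0 e unfolding integrals_vanish_at_0_def by (meson zero_less_divide_iff zero_less_numeral)
    obtain A where A: "integrals_le f {A..} (e/5)"
      using at_top e unfolding integrals_vanish_at_top_def by (meson zero_less_divide_iff zero_less_numeral)
    define q where "q = max A a"
    define P where "P = (\<lambda>x::real \<times> real. 0 < fst x \<and> fst x < a \<and> q < snd x)"
    have "dist (trunc_integral f x) (trunc_integral f y) < e" if "P x" "P y" for x y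
    proof -
      obtain e1 R1 e2 R2 where xy: "x = (e1, R1)" "y = (e2, R2)"
        by force
      have c1: "0 < e1" "e1 \<le> a" "a \<le> q" "q \<le> R1" and c2: "0 < e2" "e2 \<le> a" "q \<le> R2"
        using that unfolding P_def xy q_def by auto
      have "trunc_integral f x - trunc_integral f y
          = (integral {e1..a} f - integral {e2..a} f) + (integral {q..R1} f - integral {q..R2} f)"
        unfolding trunc_integral_def xy
        using integral_split3[OF cont c1] integral_split3[OF cont c2(1,2) c1(3) c2(3)] by simp
      moreover have "cmod (integral {e1..a} f) \<le> e/5" "cmod (integral {e2..a} f) \<le> e/5"
        using a c1 c2 unfolding integrals_le_def by auto
      moreover have "cmod (integral {q..R1} f) \<le> e/5" "cmod (integral {q..R2} f) \<le> e/5"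
        using A c1 c2 unfolding integrals_le_def q_def by auto
      ultimately have "cmod (trunc_integral f x - trunc_integral f y) \<le> (e/5 + e/5) + (e/5 + e/5)"
        by (metis norm_triangle_le norm_triangle_le_diff add_mono)
      thus ?thesis
        using e by (simp add: dist_norm)
    qed
    moreover have "eventually P trunc_filter"
      unfolding P_def by (rule eventually_trunc_filter[OF a(1)])
    ultimately show "\<exists>P. eventually P trunc_filter \<and>
        (\<forall>x y. P x \<and> P y \<longrightarrow> dist (trunc_integral f x) (trunc_integral f y) < e)"
      by blast
  qed
  obtain L where "filtermap (trunc_integral f) trunc_filter \<le> nhds L"
    using cauchy_filter_complete_converges[OF cauchy complete_UNIV] trunc_filter_ne_bot
    by (auto simp: filtermap_bot_iff)
  thus ?thesis
    by (auto simp: filterlim_def)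
qed

lemma norm_trunc_integral_limit_le:
  fixes f :: "real \<Rightarrow> complex"
  assumes lim: "(trunc_integral f \<longlongrightarrow> L) trunc_filter" and le: "integrals_le f {0<..} B"
  shows "cmod L \<le> B"
proof (rule tendsto_upperbound[OF tendsto_norm[OF lim] _ trunc_filter_ne_bot])
  show "eventually (\<lambda>x. cmod (trunc_integral f x) \<le> B) trunc_filter"
    using eventually_trunc_filter_le
    by (rule eventually_mono) (use le in \<open>auto simp: integrals_le_def trunc_integral_def split: prod.splits\<close>)
qed

lemma norm_trunc_integral_limit_diff_le:
  fixes f g :: "real \<Rightarrow> complex"
  assumes cont: "continuous_on {0<..} f" "continuous_on {0<..} g"
    and lim: "(trunc_integral f \<longlongrightarrow> L1) trunc_filter" "(trunc_integral g \<longlongrightarrow> L2) trunc_filter"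
    and le: "integrals_le (\<lambda>t. f t - g t) {0<..} B"
  shows "cmod (L1 - L2) \<le> B"
proof (rule norm_trunc_integral_limit_le[OF _ le])
  have "eventually (\<lambda>x. trunc_integral f x - trunc_integral g x = trunc_integral (\<lambda>t. f t - g t) x)
      trunc_filter"
    using eventually_trunc_filter_le
    by (rule eventually_mono) (auto simp: trunc_integral_def split: prod.splits
        intro!: integral_diff[symmetric] integrable_on_pos_interval cont)
  thus "(trunc_integral (\<lambda>t. f t - g t) \<longlongrightarrow> L1 - L2) trunc_filter"
    using tendsto_diff[OF lim] by (rule Lim_transform_eventually[rotated])
qed

lemma integrals_vanish_at_0_osc_kernel_diff:
  assumes b: "b > 1"
  shows "integrals_vanish_at_0 (\<lambda>t. osc_kernel b \<alpha> \<gamma> t - osc_kernel b \<alpha>' \<gamma>' t)"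
  unfolding integrals_vanish_at_0_def
proof (intro allI impI)
  fix e :: real assume e: "e > 0"
  define M where "M = \<bar>\<alpha> - \<alpha>'\<bar> + \<bar>\<gamma> - \<gamma>'\<bar>"
  define a where "a = min 1 (e / (M + 1))"
  have M: "0 \<le> M"
    unfolding M_def by simp
  have a: "0 < a" "a \<le> 1"
    unfolding a_def using e M by auto
  have "a powr (b - 1) \<le> 1"
    using a b powr_mono2[of "b - 1" a 1] by simp
  hence "(\<bar>\<alpha> - \<alpha>'\<bar> + \<bar>\<gamma> - \<gamma>'\<bar> * a powr (b - 1)) * a \<le> M * a"
    unfolding M_def using a by (intro mult_right_mono) (auto simp: mult_left_le)
  also have "\<dots> \<le> M * (e / (M + 1))"
    unfolding a_def using M by (intro mult_left_mono) auto
  also have "\<dots> \<le> e"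
    using M e by (simp add: field_simps)
  finally show "\<exists>a>0. integrals_le (\<lambda>t. osc_kernel b \<alpha> \<gamma> t - osc_kernel b \<alpha>' \<gamma>' t) {0<..a} e"
    using osc_kernel_diff_near_zero[OF b a(1), of \<alpha> \<gamma> \<alpha>' \<gamma>'] a(1)
    by (meson integrals_le_mono order_refl)
qed

lemma integrals_vanish_at_top_osc_kernel:
  assumes b: "b > 1" and nz: "\<alpha> \<noteq> 0 \<or> \<gamma> \<noteq> 0"
  shows "integrals_vanish_at_top (osc_kernel b \<alpha> \<gamma>)"
  unfolding integrals_vanish_at_top_def
proof (intro allI impI)
  fix e :: real assume e: "e > 0"
  show "\<exists>A>0. integrals_le (osc_kernel b \<alpha> \<gamma>) {A..} e"
  proof (cases "\<gamma> = 0")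
    case True
    hence \<alpha>: "\<alpha> \<noteq> 0"
      using nz by simp
    define A where "A = 4 / (\<bar>\<alpha>\<bar> * e)"
    have A: "0 < A"
      unfolding A_def using \<alpha> e by simp
    have "4 / (\<bar>\<alpha>\<bar> * A) = e"
      unfolding A_def using \<alpha> e by (simp add: field_simps)
    thus ?thesis
      using osc_kernel_tail_same_sign[OF b \<alpha> _ A] True A by auto
  next
    case False
    define A where "A = max 1 (max ((\<bar>\<alpha>\<bar> / \<bar>\<gamma>\<bar>) powr (1 / (b - 1))) (4 / ((b - 1) * \<bar>\<gamma>\<bar> * e)))"
    have A: "1 \<le> A" "(\<bar>\<alpha>\<bar> / \<bar>\<gamma>\<bar>) powr (1 / (b - 1)) \<le> A" "4 / ((b - 1) * \<bar>\<gamma>\<bar> * e) \<le> A"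
      unfolding A_def by (auto simp: le_max_iff_disj)
    have "\<bar>\<alpha>\<bar> / \<bar>\<gamma>\<bar> = ((\<bar>\<alpha>\<bar> / \<bar>\<gamma>\<bar>) powr (1 / (b - 1))) powr (b - 1)"
      using b by (simp add: powr_powr)
    also have "\<dots> \<le> A powr (b - 1)"
      using A(2) b by (intro powr_mono2) auto
    finally have "\<bar>\<alpha>\<bar> \<le> \<bar>\<gamma>\<bar> * A powr (b - 1)"
      using False by (simp add: divide_le_eq mult.commute)
    from osc_kernel_tail_power_dominant[OF b False _ this]
    have tail: "integrals_le (osc_kernel b \<alpha> \<gamma>) {A..} (4 / ((b - 1) * \<bar>\<gamma>\<bar> * A powr b))"
      using A(1) by simp
    have "A \<le> A powr b"
      using A(1) b powr_mono[of 1 b A] by simp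
    hence "4 / ((b - 1) * \<bar>\<gamma>\<bar> * A powr b) \<le> 4 / ((b - 1) * \<bar>\<gamma>\<bar> * A)"
      using A(1) b False by (intro divide_left_mono mult_left_mono mult_pos_pos) auto
    also have "\<dots> \<le> e"
      using A(1,3) b False e by (simp add: field_simps)
    finally show ?thesis
      using tail A(1) by (meson integrals_le_mono order_refl zero_less_one order_less_le_trans)
  qed
qed

lemma integrals_vanish_at_top_diff:
  assumes "continuous_on {0<..} f" "continuous_on {0<..} g"
    and "integrals_vanish_at_top f" "integrals_vanish_at_top g"
  shows "integrals_vanish_at_top (\<lambda>t. f t - g t)"
  unfolding integrals_vanish_at_top_def
proof (intro allI impI)
  fix e :: real assume e: "e > 0"
  obtain A1 where A1: "A1 > 0" "integrals_le f {A1..} (e/2)"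
    using assms(3) e unfolding integrals_vanish_at_top_def by (meson half_gt_zero)
  obtain A2 where A2: "integrals_le g {A2..} (e/2)"
    using assms(4) e unfolding integrals_vanish_at_top_def by (meson half_gt_zero)
  define A where "A = max A1 A2"
  have "integrals_le f {A..} (e/2)" "integrals_le g {A..} (e/2)"
    using A1 A2 unfolding A_def by (auto elim!: integrals_le_mono)
  hence "integrals_le (\<lambda>t. f t - g t) {A..} (e/2 + e/2)"
    using A1 unfolding A_def by (intro integrals_le_diff assms(1,2)) auto
  thus "\<exists>A>0. integrals_le (\<lambda>t. f t - g t) {A..} e"
    using A1 unfolding A_def by (intro exI[of _ A]) (auto simp: A_def)
qed

text \<open>The integrand of \<open>m\<close> after folding \<open>(-\<infinity>, 0)\<close> onto \<open>(0, \<infinity>)\<close> by \<open>t \<mapsto> -t\<close>.\<close>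

definition multiplier_integrand :: "real \<Rightarrow> real \<Rightarrow> real \<Rightarrow> real \<Rightarrow> real \<Rightarrow> real \<Rightarrow> complex" where
  "multiplier_integrand b cp cm x1 x2 t = osc_kernel b x1 (cp * x2) t - osc_kernel b (- x1) (cm * x2) t"

lemma mult_trunc_eq_integral:
  assumes "0 < eps" "eps \<le> R"
  shows "mult_trunc b cp cm x1 x2 eps R = integral {eps..R} (multiplier_integrand b cp cm x1 x2)"
proof -
  have pos_half: "(\<lambda>t. cis (- (t * x1 + cp * t powr b * x2)) / complex_of_real t) = osc_kernel b x1 (cp * x2)"
    by (auto simp: osc_kernel_def fun_eq_iff mult_ac)
  define g where "g s = - osc_kernel b (- x1) (cm * x2) s" for s
  have "(\<lambda>t. cis (- (t * x1 + cm * (- t) powr b * x2)) / complex_of_real t) = (\<lambda>t. g (- t))"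
    by (auto simp: g_def osc_kernel_def fun_eq_iff mult_ac)
  hence neg_half: "integral {- R..- eps} (\<lambda>t. cis (- (t * x1 + cm * (- t) powr b * x2)) / complex_of_real t)
      = - integral {eps..R} (osc_kernel b (- x1) (cm * x2))"
    unfolding g_def by (simp add: integral_neg)
  have "integral {eps..R} (multiplier_integrand b cp cm x1 x2)
      = integral {eps..R} (osc_kernel b x1 (cp * x2)) - integral {eps..R} (osc_kernel b (- x1) (cm * x2))"
    unfolding multiplier_integrand_def
    by (intro integral_diff integrable_on_pos_interval[OF continuous_on_osc_kernel] assms(1))
  thus ?thesis
    unfolding mult_trunc_def pos_half neg_half by simp
qed

lemma continuous_on_multiplier_integrand: "continuous_on {0<..} (multiplier_integrand b cp cm x1 x2)"
  unfolding multiplier_integrand_def[abs_def] by (rule continuous_on_osc_kernel_diff)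

lemma multiplier_integrand_converges:
  assumes b: "b > 1" and cp: "cp \<noteq> 0" and cm: "cm \<noteq> 0"
  shows "\<exists>L. (trunc_integral (multiplier_integrand b cp cm x1 x2) \<longlongrightarrow> L) trunc_filter"
proof (cases "x1 = 0 \<and> x2 = 0")
  case True
  hence "multiplier_integrand b cp cm x1 x2 = (\<lambda>_. 0)"
    by (auto simp: multiplier_integrand_def fun_eq_iff)
  hence "trunc_integral (multiplier_integrand b cp cm x1 x2) = (\<lambda>_. 0)"
    by (auto simp: trunc_integral_def)
  thus ?thesis
    by auto
next
  case False
  hence "x1 \<noteq> 0 \<or> cp * x2 \<noteq> 0" "- x1 \<noteq> 0 \<or> cm * x2 \<noteq> 0"
    using cp cm by auto
  thus ?thesis
    unfolding multiplier_integrand_def[abs_def]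
    by (intro trunc_integral_converges continuous_on_osc_kernel_diff
        integrals_vanish_at_0_osc_kernel_diff[OF b] integrals_vanish_at_top_diff
        continuous_on_osc_kernel integrals_vanish_at_top_osc_kernel[OF b])
qed

lemma mult_m_eq_limit:
  assumes "(trunc_integral (multiplier_integrand b cp cm x1 x2) \<longlongrightarrow> L) trunc_filter"
  shows "mult_m b cp cm x1 x2 = L"
proof -
  have "eventually (\<lambda>x. (\<lambda>(eps, R). mult_trunc b cp cm x1 x2 eps R) x
      = trunc_integral (multiplier_integrand b cp cm x1 x2) x) trunc_filter"
    using eventually_trunc_filter_le
    by (rule eventually_mono) (auto simp: mult_trunc_eq_integral trunc_integral_def split: prod.splits)
  hence "((\<lambda>(eps, R). mult_trunc b cp cm x1 x2 eps R) \<longlongrightarrow> L) trunc_filter"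
    using assms by (simp add: tendsto_cong)
  thus ?thesis
    unfolding mult_m_def by (rule tendsto_Lim[OF trunc_filter_ne_bot])
qed

lemma norm_mult_m_diff_le:
  assumes b: "b > 1" and cp: "cp \<noteq> 0" and cm: "cm \<noteq> 0"
    and le: "integrals_le (\<lambda>t. multiplier_integrand b cp cm x1 x2 t - multiplier_integrand b cp cm y1 y2 t)
               {0<..} B"
  shows "cmod (mult_m b cp cm x1 x2 - mult_m b cp cm y1 y2) \<le> B"
proof -
  obtain L1 L2 where
    L1: "(trunc_integral (multiplier_integrand b cp cm x1 x2) \<longlongrightarrow> L1) trunc_filter" and
    L2: "(trunc_integral (multiplier_integrand b cp cm y1 y2) \<longlongrightarrow> L2) trunc_filter"
    using multiplier_integrand_converges[OF b cp cm] by meson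
  show ?thesis
    unfolding mult_m_eq_limit[OF L1] mult_m_eq_limit[OF L2]
    by (rule norm_trunc_integral_limit_diff_le[OF continuous_on_multiplier_integrand
          continuous_on_multiplier_integrand L1 L2 le])
qed

lemma mult_m_perturb_power:
  fixes b cp cm x1 x2 :: real
  assumes b: "b > 1" and cp: "cp \<noteq> 0" and cm: "cm \<noteq> 0" and x1: "x1 \<noteq> 0"
  shows "cmod (mult_m b cp cm x1 x2 - mult_m b cp cm x1 0)
           \<le> kernel_const b * (\<bar>cp\<bar> powr (1 / (2 * b)) + \<bar>cm\<bar> powr (1 / (2 * b)))
               * (\<bar>x2\<bar> / \<bar>x1\<bar> powr b) powr (1 / (2 * b))"
proof (rule norm_mult_m_diff_le[OF b cp cm])
  define r where "r = (\<bar>x2\<bar> / \<bar>x1\<bar> powr b) powr (1 / (2 * b))"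
  have "(\<bar>c * x2\<bar> / \<bar>x1\<bar> powr b) powr (1 / (2 * b)) = \<bar>c\<bar> powr (1 / (2 * b)) * r" for c
  proof -
    have "\<bar>c * x2\<bar> / \<bar>x1\<bar> powr b = \<bar>c\<bar> * (\<bar>x2\<bar> / \<bar>x1\<bar> powr b)"
      by (simp add: abs_mult)
    also have "(\<dots>) powr (1 / (2 * b)) = \<bar>c\<bar> powr (1 / (2 * b)) * r"
      unfolding r_def by (rule powr_mult)
    finally show ?thesis .
  qed
  hence diff_le: "integrals_le (\<lambda>t. (osc_kernel b x1 (cp * x2) t - osc_kernel b x1 0 t)
      - (osc_kernel b (- x1) (cm * x2) t - osc_kernel b (- x1) 0 t)) {0<..}
      (kernel_const b * (\<bar>cp\<bar> powr (1 / (2 * b)) * r) + kernel_const b * (\<bar>cm\<bar> powr (1 / (2 * b)) * r))"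
    using osc_kernel_drop_power[OF b x1, of "cp * x2"] osc_kernel_drop_power[OF b, of "- x1" "cm * x2"] x1
    by (intro integrals_le_diff continuous_on_osc_kernel_diff) auto
  show "integrals_le (\<lambda>t. multiplier_integrand b cp cm x1 x2 t - multiplier_integrand b cp cm x1 0 t) {0<..}
      (kernel_const b * (\<bar>cp\<bar> powr (1 / (2 * b)) + \<bar>cm\<bar> powr (1 / (2 * b))) * r)"
    unfolding multiplier_integrand_def
    by (rule integrals_le_cong[OF _ _ integrals_le_mono[OF diff_le]]) (auto simp: algebra_simps)
qed

lemma mult_m_perturb_linear:
  fixes b cp cm x1 x2 :: real
  assumes b: "b > 1" and cp: "cp \<noteq> 0" and cm: "cm \<noteq> 0" and x2: "x2 \<noteq> 0"
  shows "cmod (mult_m b cp cm x1 x2 - mult_m b cp cm 0 x2)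
           \<le> kernel_const b * (\<bar>cp\<bar> powr (- (1 / (2 * b))) + \<bar>cm\<bar> powr (- (1 / (2 * b))))
               * (\<bar>x1\<bar> powr b / \<bar>x2\<bar>) powr (1 / (2 * b))"
proof (rule norm_mult_m_diff_le[OF b cp cm])
  define r where "r = (\<bar>x1\<bar> powr b / \<bar>x2\<bar>) powr (1 / (2 * b))"
  have "(\<bar>x1\<bar> powr b / \<bar>c * x2\<bar>) powr (1 / (2 * b)) = \<bar>c\<bar> powr (- (1 / (2 * b))) * r" if "c \<noteq> 0" for c
  proof -
    have "\<bar>x1\<bar> powr b / \<bar>c * x2\<bar> = (1 / \<bar>c\<bar>) * (\<bar>x1\<bar> powr b / \<bar>x2\<bar>)"
      by (simp add: abs_mult)
    also have "(\<dots>) powr (1 / (2 * b)) = (1 / \<bar>c\<bar>) powr (1 / (2 * b)) * r"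
      unfolding r_def by (rule powr_mult)
    also have "(1 / \<bar>c\<bar>) powr (1 / (2 * b)) = \<bar>c\<bar> powr (- (1 / (2 * b)))"
      by (simp add: powr_minus_divide powr_divide)
    finally show ?thesis .
  qed
  hence diff_le: "integrals_le (\<lambda>t. (osc_kernel b x1 (cp * x2) t - osc_kernel b 0 (cp * x2) t)
      - (osc_kernel b (- x1) (cm * x2) t - osc_kernel b 0 (cm * x2) t)) {0<..}
      (kernel_const b * (\<bar>cp\<bar> powr (- (1 / (2 * b))) * r) + kernel_const b * (\<bar>cm\<bar> powr (- (1 / (2 * b))) * r))"
    using osc_kernel_drop_linear[OF b, of "cp * x2" x1] osc_kernel_drop_linear[OF b, of "cm * x2" "- x1"]
      cp cm x2
    by (intro integrals_le_diff continuous_on_osc_kernel_diff) auto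
  show "integrals_le (\<lambda>t. multiplier_integrand b cp cm x1 x2 t - multiplier_integrand b cp cm 0 x2 t) {0<..}
      (kernel_const b * (\<bar>cp\<bar> powr (- (1 / (2 * b))) + \<bar>cm\<bar> powr (- (1 / (2 * b)))) * r)"
    unfolding multiplier_integrand_def
    by (rule integrals_le_cong[OF _ _ integrals_le_mono[OF diff_le]]) (auto simp: algebra_simps)
qed

theorem lemma8p3:
  fixes b cp cm :: real
  assumes "b > 1" and "cp \<noteq> 0" and "cm \<noteq> 0"
  shows "\<exists>C\<ge>1. \<forall>x1 x2 :: real.
     (x1 \<noteq> 0 \<longrightarrow> cmod (mult_m b cp cm x1 x2 - mult_m b cp cm x1 0)
        \<le> C * (\<bar>x2\<bar> / \<bar>x1\<bar> powr b) powr (1 / (2 * b))) \<and>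
     (x2 \<noteq> 0 \<longrightarrow> cmod (mult_m b cp cm x1 x2 - mult_m b cp cm 0 x2)
        \<le> C * (\<bar>x1\<bar> powr b / \<bar>x2\<bar>) powr (1 / (2 * b)))"
proof -
  define a where "a = 1 / (2 * b)"
  define C1 where "C1 = kernel_const b * (\<bar>cp\<bar> powr a + \<bar>cm\<bar> powr a)"
  define C2 where "C2 = kernel_const b * (\<bar>cp\<bar> powr (- a) + \<bar>cm\<bar> powr (- a))"
  have C: "0 \<le> C1" "0 \<le> C2"
    unfolding C1_def C2_def using kernel_const_ge(3)[OF assms(1)] by simp_all
  have "cmod (mult_m b cp cm x1 x2 - mult_m b cp cm x1 0) \<le> (1 + C1 + C2) * (\<bar>x2\<bar> / \<bar>x1\<bar> powr b) powr a"
    if "x1 \<noteq> 0" for x1 x2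
  proof -
    have "cmod (mult_m b cp cm x1 x2 - mult_m b cp cm x1 0) \<le> C1 * (\<bar>x2\<bar> / \<bar>x1\<bar> powr b) powr a"
      using mult_m_perturb_power[OF assms that] unfolding C1_def a_def .
    also have "\<dots> \<le> (1 + C1 + C2) * (\<bar>x2\<bar> / \<bar>x1\<bar> powr b) powr a"
      using C by (intro mult_right_mono) auto
    finally show ?thesis .
  qed
  moreover have "cmod (mult_m b cp cm x1 x2 - mult_m b cp cm 0 x2) \<le> (1 + C1 + C2) * (\<bar>x1\<bar> powr b / \<bar>x2\<bar>) powr a"
    if "x2 \<noteq> 0" for x1 x2
  proof -
    have "cmod (mult_m b cp cm x1 x2 - mult_m b cp cm 0 x2) \<le> C2 * (\<bar>x1\<bar> powr b / \<bar>x2\<bar>) powr a"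
      using mult_m_perturb_linear[OF assms that] unfolding C2_def a_def .
    also have "\<dots> \<le> (1 + C1 + C2) * (\<bar>x1\<bar> powr b / \<bar>x2\<bar>) powr a"
      using C by (intro mult_right_mono) auto
    finally show ?thesis .
  qed
  ultimately show ?thesis
    using C unfolding a_def by (intro exI[of _ "1 + C1 + C2"]) auto
qed

end
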